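(* Let $G=H\oplus K$ be a $2$-sum or a $3$-sum of $2$-connected cubic graphs $H$ and $K$, where $H$ is a snark with $\pi(H)\ge 5$ and $K$ is $3$-edge-colourable. If $u$ is an apex of $H$ different from the distinguished vertex of $H$ for the $3$-sum (in the case of a $3$-sum), then $u$ is an apex of $G$.
   Context: Graphs are finite; loops and multiple edges are allowed. A snark is a $2$-connected cubic graph with no proper $3$-edge-colouring. The perfect matching index $\pi(G)$ is the smallest number of perfect matchings of $G$ whose union is $E(G)$. For a vertex $v$, $G^v$ denotes the graph obtained by inflating $v$ to a triangle (deleting $v$, adding a new triangle, and attaching the three edge-ends formerly at $v$ to its three distinct vertices). A vertex $v$ of a snark $G$ is an apex if $\pi(G^v)=4$. A $2$-sum with distinguished edges $e\in E(H)$, $f\in E(K)$ deletes $e,f$ and joins the $2$-valent vertices of $H-e$ to those of $K-f$ by two new independent edges. A $3$-sum with distinguished vertices $u'\in V(H)$, $v'\in V(K)$ deletes $u',v'$ and joins the three dangling edge-ends formerly at $u'$ bijectively to those formerly at $v'$. *)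

theory Defs
  imports Main "HOL-Library.Extended_Nat"
begin

text \<open>Finite multigraphs (loops and parallel edges allowed).  Every edge e has two
  ends, indexed by a boolean; endp e b is the vertex at end b of e.  A loop at v has
  both ends equal to v.\<close>

record ('v, 'e) mgraph =
  verts :: "'v set"
  edges :: "'e set"
  endp  :: "'e \<Rightarrow> bool \<Rightarrow> 'v"

definition wf_graph :: "('v, 'e) mgraph \<Rightarrow> bool" where
  "wf_graph G \<longleftrightarrow> finite (verts G) \<and> finite (edges G) \<and>
     (\<forall>e\<in>edges G. \<forall>b. endp G e b \<in> verts G)"

definition darts_at :: "('v, 'e) mgraph \<Rightarrow> 'v \<Rightarrow> ('e \<times> bool) set" where
  "darts_at G v = {(e, b). e \<in> edges G \<and> endp G e b = v}"

definition cubic :: "('v, 'e) mgraph \<Rightarrow> bool" where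
  "cubic G \<longleftrightarrow> (\<forall>v\<in>verts G. card (darts_at G v) = 3)"

definition adj_rel :: "('v, 'e) mgraph \<Rightarrow> ('v \<times> 'v) set" where
  "adj_rel G = {(u, w). \<exists>e\<in>edges G. (endp G e False = u \<and> endp G e True = w) \<or>
                                      (endp G e True = u \<and> endp G e False = w)}"

definition connected_graph :: "('v, 'e) mgraph \<Rightarrow> bool" where
  "connected_graph G \<longleftrightarrow> verts G \<noteq> {} \<and>
     (\<forall>u\<in>verts G. \<forall>w\<in>verts G. (u, w) \<in> (adj_rel G)\<^sup>*)"

definition delete_edge :: "('v, 'e) mgraph \<Rightarrow> 'e \<Rightarrow> ('v, 'e) mgraph" where
  "delete_edge G e = G\<lparr>edges := edges G - {e}\<rparr>"

text \<open>2-connected (for cubic graphs: connected and bridgeless).\<close>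
definition two_connected :: "('v, 'e) mgraph \<Rightarrow> bool" where
  "two_connected G \<longleftrightarrow> connected_graph G \<and>
     (\<forall>e\<in>edges G. connected_graph (delete_edge G e))"

text \<open>Proper 3-edge-colouring: the darts at each vertex receive distinct colours
  (so loops are never properly coloured).\<close>
definition three_edge_colourable :: "('v, 'e) mgraph \<Rightarrow> bool" where
  "three_edge_colourable G \<longleftrightarrow> (\<exists>c :: 'e \<Rightarrow> nat. (\<forall>e\<in>edges G. c e < 3) \<and>
     (\<forall>v\<in>verts G. inj_on (\<lambda>d. c (fst d)) (darts_at G v)))"

definition snark :: "('v, 'e) mgraph \<Rightarrow> bool" where
  "snark G \<longleftrightarrow> wf_graph G \<and> cubic G \<and> two_connected G \<and> \<not> three_edge_colourable G"

definition perfect_matching :: "('v, 'e) mgraph \<Rightarrow> 'e set \<Rightarrow> bool" where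
  "perfect_matching G M \<longleftrightarrow> M \<subseteq> edges G \<and>
     (\<forall>v\<in>verts G. card {d \<in> darts_at G v. fst d \<in> M} = 1)"

text \<open>Perfect matching index (infinity if no cover by perfect matchings exists).\<close>
definition pmi :: "('v, 'e) mgraph \<Rightarrow> enat" where
  "pmi G = Inf {enat (card S) | S. finite S \<and> (\<forall>M\<in>S. perfect_matching G M) \<and>
                                  \<Union>S = edges G}"

text \<open>Inflation of v to a triangle with vertices Inr 0, Inr 1, Inr 2 and triangle
  edges Inr i joining Inr i and Inr ((i+1) mod 3); f assigns the darts at v to the
  triangle vertices.\<close>
definition inflate :: "('v, 'e) mgraph \<Rightarrow> 'v \<Rightarrow> ('e \<times> bool \<Rightarrow> nat)
                         \<Rightarrow> ('v + nat, 'e + nat) mgraph" where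
  "inflate G v f = \<lparr> verts = Inl ` (verts G - {v}) \<union> Inr ` {0, 1, 2},
     edges = Inl ` edges G \<union> Inr ` {0, 1, 2},
     endp = (\<lambda>x b. case x of
               Inl e \<Rightarrow> (if endp G e b = v then Inr (f (e, b)) else Inl (endp G e b))
             | Inr i \<Rightarrow> Inr (if b then (i + 1) mod 3 else i)) \<rparr>"

definition apex :: "('v, 'e) mgraph \<Rightarrow> 'v \<Rightarrow> bool" where
  "apex G v \<longleftrightarrow> snark G \<and> v \<in> verts G \<and>
     (\<exists>f. bij_betw f (darts_at G v) {0, 1, 2} \<and> pmi (inflate G v f) = 4)"

text \<open>2-sum with distinguished edges e (of H) and f (of K).  The new edge Inr c joins
  end c of e to end (c = p) of f; the parameter p selects one of the two ways of
  pairing the 2-valent vertices.\<close>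
definition two_sum :: "('v1, 'e1) mgraph \<Rightarrow> ('v2, 'e2) mgraph \<Rightarrow> 'e1 \<Rightarrow> 'e2 \<Rightarrow> bool
                         \<Rightarrow> ('v1 + 'v2, ('e1 + 'e2) + bool) mgraph" where
  "two_sum H K e f p = \<lparr> verts = Inl ` verts H \<union> Inr ` verts K,
     edges = Inl ` Inl ` (edges H - {e}) \<union> Inl ` Inr ` (edges K - {f}) \<union> range Inr,
     endp = (\<lambda>x b. case x of
               Inl (Inl g) \<Rightarrow> Inl (endp H g b)
             | Inl (Inr g) \<Rightarrow> Inr (endp K g b)
             | Inr c \<Rightarrow> (if b then Inr (endp K f (c = p)) else Inl (endp H e c))) \<rparr>"

text \<open>The new edge Inr d (d a dart at u') joins
  the far end of the edge of d to the far end of the edge of sigma d.\<close>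
definition three_sum :: "('v1, 'e1) mgraph \<Rightarrow> ('v2, 'e2) mgraph \<Rightarrow> 'v1 \<Rightarrow> 'v2
                         \<Rightarrow> ('e1 \<times> bool \<Rightarrow> 'e2 \<times> bool)
                         \<Rightarrow> ('v1 + 'v2, ('e1 + 'e2) + ('e1 \<times> bool)) mgraph" where
  "three_sum H K u' v' \<sigma> = \<lparr> verts = Inl ` (verts H - {u'}) \<union> Inr ` (verts K - {v'}),
     edges = Inl ` Inl ` {g \<in> edges H. endp H g False \<noteq> u' \<and> endp H g True \<noteq> u'}
           \<union> Inl ` Inr ` {g \<in> edges K. endp K g False \<noteq> v' \<and> endp K g True \<noteq> v'}
           \<union> Inr ` darts_at H u',
     endp = (\<lambda>x b. case x of
               Inl (Inl g) \<Rightarrow> Inl (endp H g b)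
             | Inl (Inr g) \<Rightarrow> Inr (endp K g b)
             | Inr d \<Rightarrow> (if b then Inr (endp K (fst (\<sigma> d)) (\<not> snd (\<sigma> d)))
                         else Inl (endp H (fst d) (\<not> snd d)))) \<rparr>"

end

theory Submission
  imports Defs
begin

(* Inflating u commutes with the sum: G^u is the 2- or 3-sum of H^u and K.  The new edges form a
   2- or 3-edge-cut of G^u whose K-side has an even resp. odd number of vertices (K is
   3-edge-colourable, hence of even order).  By parity, every colour class of a 3-edge-colouring
   of G^u meets the cut in an even resp. odd number of edges, so the new edges get equal resp.
   pairwise distinct colours and the colouring restricts to one of H^u, contradicting
   pi(H^u) = 4.  Hence pi(G^u) >= 4, and G is a snark because a colouring of G would inflate to
   one of G^u.  Conversely, each of the four perfect matchings covering H^u is combined with the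
   colour class of K that agrees with it on the cut; choosing these so that all three colour
   classes occur yields four perfect matchings covering G^u.  2-connectivity of G is checked cut
   by cut from that of H and K. *)

lemma two_le_card_iff: "2 \<le> card X \<longleftrightarrow> finite X \<and> (\<exists>a\<in>X. \<exists>b\<in>X. a \<noteq> b)"
proof
  assume X: "2 \<le> card X"
  then have fin: "finite X" by (metis card.infinite not_numeral_le_zero)
  then obtain a where a: "a \<in> X" using X by fastforce
  have "card (X - {a}) \<ge> 1" using X a fin by simp
  then have "X - {a} \<noteq> {}" by (metis card.empty not_one_le_zero)
  then show "finite X \<and> (\<exists>a\<in>X. \<exists>b\<in>X. a \<noteq> b)" using a fin by blast
next
  assume "finite X \<and> (\<exists>a\<in>X. \<exists>b\<in>X. a \<noteq> b)"
  then obtain a b where "finite X" "a \<in> X" "b \<in> X" "a \<noteq> b" by blast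
  then have "card {a, b} \<le> card X" by (intro card_mono) auto
  with \<open>a \<noteq> b\<close> show "2 \<le> card X" by simp
qed

lemma two_le_cardI: "finite X \<Longrightarrow> a \<in> X \<Longrightarrow> b \<in> X \<Longrightarrow> a \<noteq> b \<Longrightarrow> 2 \<le> card X"
  unfolding two_le_card_iff by blast

lemma two_le_card_ex_other: "2 \<le> card X \<Longrightarrow> \<exists>a\<in>X. a \<noteq> x"
  unfolding two_le_card_iff by metis

lemma card_Collect_bij_betw:
  assumes "bij_betw \<psi> A B" "\<And>a. a \<in> A \<Longrightarrow> P a \<longleftrightarrow> Q (\<psi> a)"
  shows "card {a\<in>A. P a} = card {b\<in>B. Q b}"
proof -
  have "bij_betw \<psi> {a\<in>A. P a} {b\<in>B. Q b}"
    using assms unfolding bij_betw_def inj_on_def by auto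
  then show ?thesis by (rule bij_betw_same_card)
qed

lemma inj_on_bij_betw_comp:
  assumes "bij_betw \<Phi> A B" "\<And>a. a \<in> A \<Longrightarrow> c' a = c (\<Phi> a)" "inj_on c B"
  shows "inj_on c' A"
proof -
  have "inj_on (c \<circ> \<Phi>) A"
    using assms(1,3) by (simp add: bij_betw_def comp_inj_on)
  then show ?thesis using assms(2) by (metis (no_types, lifting) comp_apply inj_on_cong)
qed

lemma card_Un_image_le: "finite B \<Longrightarrow> card (A \<union> h ` B) \<le> card A + card B"
  using card_Un_le[of A "h ` B"] card_image_le[of B h] by linarith

lemma bij_betw_if_card_3:
  assumes "\<Phi> ` A = B" "card A = 3" "card B = 3"
  shows "bij_betw \<Phi> A B"
proof -
  have "finite A" using assms(2) by (metis card.infinite zero_neq_numeral)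
  then have "inj_on \<Phi> A" using assms by (intro eq_card_imp_inj_on) auto
  then show ?thesis using assms(1) by (simp add: bij_betw_def)
qed

lemma dart_in_edges: "d \<in> darts_at G v \<Longrightarrow> fst d \<in> edges G"
  by (cases d) (simp add: darts_at_def)

lemma finite_darts_at: "wf_graph G \<Longrightarrow> finite (darts_at G v)"
  by (rule finite_subset[of _ "edges G \<times> UNIV"]) (auto simp: darts_at_def wf_graph_def)

lemma endp_in_verts: "wf_graph G \<Longrightarrow> g \<in> edges G \<Longrightarrow> endp G g b \<in> verts G"
  by (simp add: wf_graph_def)

definition far_end :: "('v, 'e) mgraph \<Rightarrow> 'e \<times> bool \<Rightarrow> 'v" where
  "far_end G d = endp G (fst d) (\<not> snd d)"

section \<open>Cuts and 2-connectivity\<close>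

definition cut_edges :: "('v, 'e) mgraph \<Rightarrow> 'v set \<Rightarrow> 'e set" where
  "cut_edges G S = {g \<in> edges G. (endp G g False \<in> S) \<noteq> (endp G g True \<in> S)}"

definition inner_edges :: "('v, 'e) mgraph \<Rightarrow> 'v set \<Rightarrow> 'e set" where
  "inner_edges G S = {g \<in> edges G. endp G g False \<in> S \<and> endp G g True \<in> S}"

definition edges_avoiding :: "('v, 'e) mgraph \<Rightarrow> 'v \<Rightarrow> 'e set" where
  "edges_avoiding G w = {g \<in> edges G. endp G g False \<noteq> w \<and> endp G g True \<noteq> w}"

lemma finite_cut_edges: "wf_graph G \<Longrightarrow> finite (cut_edges G S)"
  by (auto simp: wf_graph_def cut_edges_def)

lemma cut_edges_delete_edge: "cut_edges (delete_edge G e) S = cut_edges G S - {e}"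
  by (auto simp: cut_edges_def delete_edge_def)

lemma cut_edges_nonempty_if_connected:
  assumes c: "connected_graph G" and S: "S \<subseteq> verts G" "S \<noteq> {}" "S \<noteq> verts G"
  shows "cut_edges G S \<noteq> {}"
proof
  assume cut: "cut_edges G S = {}"
  obtain x where x: "x \<in> S" using S by auto
  obtain w where w: "w \<in> verts G" "w \<notin> S" using S by auto
  have "y \<in> S" if "(x, y) \<in> (adj_rel G)\<^sup>*" for y
    using that
  proof (induction rule: rtrancl_induct)
    case (step y z)
    then obtain g where "g \<in> edges G" "(endp G g False = y \<and> endp G g True = z) \<or>
        (endp G g True = y \<and> endp G g False = z)" unfolding adj_rel_def by auto
    moreover have "g \<notin> cut_edges G S" using cut by simp
    ultimately show ?case using step.IH unfolding cut_edges_def by auto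
  qed (use x in simp)
  moreover have "(x, w) \<in> (adj_rel G)\<^sup>*" using c x w S unfolding connected_graph_def by auto
  ultimately show False using w by simp
qed

lemma connected_graphI_cut_edges:
  assumes wf: "wf_graph G" and ne: "verts G \<noteq> {}"
    and cut: "\<And>S. S \<subseteq> verts G \<Longrightarrow> S \<noteq> {} \<Longrightarrow> S \<noteq> verts G \<Longrightarrow> cut_edges G S \<noteq> {}"
  shows "connected_graph G"
  unfolding connected_graph_def
proof (intro conjI ballI ne)
  fix u w assume u: "u \<in> verts G" and w: "w \<in> verts G"
  define S where "S = {x \<in> verts G. (u, x) \<in> (adj_rel G)\<^sup>*}"
  have closed: "endp G g (\<not> b) \<in> S" if g: "g \<in> edges G" "endp G g b \<in> S" for g b
  proof -
    have "(endp G g b, endp G g (\<not> b)) \<in> adj_rel G" using g(1) by (cases b) (auto simp: adj_rel_def)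
    moreover have "(u, endp G g b) \<in> (adj_rel G)\<^sup>*" using g(2) by (simp add: S_def)
    ultimately have "(u, endp G g (\<not> b)) \<in> (adj_rel G)\<^sup>*" by (rule rtrancl_into_rtrancl[rotated])
    then show ?thesis using endp_in_verts[OF wf g(1)] by (simp add: S_def)
  qed
  have "g \<notin> cut_edges G S" for g
  proof
    assume g: "g \<in> cut_edges G S"
    then have "g \<in> edges G" by (simp add: cut_edges_def)
    then show False using g closed[of g False] closed[of g True]
      by (cases "endp G g False \<in> S") (auto simp: cut_edges_def)
  qed
  moreover have "S \<subseteq> verts G" "S \<noteq> {}" using u by (auto simp: S_def)
  ultimately have "S = verts G" using cut[of S] by blast
  then show "(u, w) \<in> (adj_rel G)\<^sup>*" using w by (auto simp: S_def)
qed

lemma two_connected_cut_edges: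
  assumes wf: "wf_graph G" and tc: "two_connected G"
    and S: "S \<subseteq> verts G" "S \<noteq> {}" "S \<noteq> verts G"
  shows "2 \<le> card (cut_edges G S)"
proof -
  have "cut_edges G S \<noteq> {}"
    using tc S cut_edges_nonempty_if_connected by (auto simp: two_connected_def)
  then obtain g where g: "g \<in> cut_edges G S" by blast
  then have "connected_graph (delete_edge G g)"
    using tc by (simp add: two_connected_def cut_edges_def)
  moreover have "verts (delete_edge G g) = verts G" by (simp add: delete_edge_def)
  ultimately have "cut_edges (delete_edge G g) S \<noteq> {}"
    using cut_edges_nonempty_if_connected[of "delete_edge G g" S] S by simp
  then have "cut_edges G S - {g} \<noteq> {}" by (simp add: cut_edges_delete_edge)
  then show ?thesis using g finite_cut_edges[OF wf] by (auto simp: two_le_card_iff)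
qed

lemma two_connectedI_cut_edges:
  assumes wf: "wf_graph G" and ne: "verts G \<noteq> {}"
    and cut: "\<And>S. S \<subseteq> verts G \<Longrightarrow> S \<noteq> {} \<Longrightarrow> S \<noteq> verts G \<Longrightarrow> 2 \<le> card (cut_edges G S)"
  shows "two_connected G"
  unfolding two_connected_def
proof (intro conjI ballI)
  show "connected_graph G"
  proof (rule connected_graphI_cut_edges[OF wf ne])
    fix S assume "S \<subseteq> verts G" "S \<noteq> {}" "S \<noteq> verts G"
    then show "cut_edges G S \<noteq> {}" using cut[of S] by auto
  qed
  fix e
  have "wf_graph (delete_edge G e)" "verts (delete_edge G e) = verts G"
    using wf by (auto simp: wf_graph_def delete_edge_def)
  moreover have "cut_edges G S - {e} \<noteq> {}"
    if "S \<subseteq> verts G" "S \<noteq> {}" "S \<noteq> verts G" for S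
    using cut[OF that] by (auto simp: two_le_card_iff)
  ultimately show "connected_graph (delete_edge G e)"
    using ne connected_graphI_cut_edges[of "delete_edge G e"] by (simp add: cut_edges_delete_edge)
qed

lemma two_connected_cubic_no_loop:
  assumes wf: "wf_graph G" and cub: "cubic G" and tc: "two_connected G" and g: "g \<in> edges G"
  shows "endp G g False \<noteq> endp G g True"
proof
  assume loop: "endp G g False = endp G g True"
  define v where "v = endp G g False"
  have v: "v \<in> verts G" using wf g by (simp add: wf_graph_def v_def)
  have gv: "(g, False) \<in> darts_at G v" "(g, True) \<in> darts_at G v"
    using g loop by (auto simp: darts_at_def v_def)
  have c3: "card (darts_at G v) = 3" using cub v by (simp add: cubic_def)
  have "\<not> darts_at G v \<subseteq> {(g, False), (g, True)}"
  proof
    assume "darts_at G v \<subseteq> {(g, False), (g, True)}"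
    then have "card (darts_at G v) \<le> card {(g, False), (g, True)}" by (intro card_mono) auto
    then show False using c3 by simp
  qed
  then obtain h b where hb: "(h, b) \<in> darts_at G v" "(h, b) \<notin> {(g, False), (g, True)}" by auto
  then have "h \<noteq> g" by (cases b) auto
  have D: "darts_at G v = {(g, False), (g, True), (h, b)}"
  proof (rule sym, rule card_subset_eq)
    show "finite (darts_at G v)" using finite_darts_at[OF wf] .
    show "{(g, False), (g, True), (h, b)} \<subseteq> darts_at G v" using gv hb by auto
    show "card {(g, False), (g, True), (h, b)} = card (darts_at G v)" using c3 \<open>h \<noteq> g\<close> by simp
  qed
  have h: "h \<in> edges G" "endp G h b = v" using hb by (auto simp: darts_at_def)
  have "{v} \<noteq> verts G"
  proof
    assume "{v} = verts G"
    moreover have "endp G h (\<not> b) \<in> verts G" using wf h by (simp add: wf_graph_def)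
    ultimately have "(h, \<not> b) \<in> darts_at G v" using h by (auto simp: darts_at_def)
    then show False using D \<open>h \<noteq> g\<close> by auto
  qed
  then have "2 \<le> card (cut_edges G {v})" using two_connected_cut_edges[OF wf tc] v by simp
  moreover have "cut_edges G {v} \<subseteq> {h}"
  proof
    fix k assume k: "k \<in> cut_edges G {v}"
    then have "k \<in> edges G" "endp G k False = v \<or> endp G k True = v"
      by (auto simp: cut_edges_def)
    then have "(k, False) \<in> darts_at G v \<or> (k, True) \<in> darts_at G v"
      by (auto simp: darts_at_def)
    then have "k = g \<or> k = h" using D by auto
    moreover have "k \<noteq> g" using k loop by (auto simp: cut_edges_def)
    ultimately show "k \<in> {h}" by simp
  qed
  then have "card (cut_edges G {v}) \<le> 1" using card_mono[of "{h}"] by simp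
  ultimately show False by simp
qed

lemma far_end_in_verts: "wf_graph G \<Longrightarrow> d \<in> darts_at G v \<Longrightarrow> far_end G d \<in> verts G"
  by (cases d) (simp add: far_end_def darts_at_def wf_graph_def)

lemma far_end_neq:
  "wf_graph G \<Longrightarrow> cubic G \<Longrightarrow> two_connected G \<Longrightarrow> d \<in> darts_at G v \<Longrightarrow> far_end G d \<noteq> v"
  using two_connected_cubic_no_loop[of G "fst d"]
  by (cases d; cases "snd d") (auto simp: far_end_def darts_at_def)

lemma cut_edges_subset_at_vertex:
  "cut_edges G X \<subseteq> (cut_edges G (X - {w}) \<inter> edges_avoiding G w)
     \<union> fst ` {d \<in> darts_at G w. (far_end G d \<in> X) \<noteq> (w \<in> X)}"
proof
  fix g assume g: "g \<in> cut_edges G X"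
  show "g \<in> (cut_edges G (X - {w}) \<inter> edges_avoiding G w)
      \<union> fst ` {d \<in> darts_at G w. (far_end G d \<in> X) \<noteq> (w \<in> X)}"
  proof (cases "g \<in> edges_avoiding G w")
    case True
    then show ?thesis using g by (auto simp: cut_edges_def edges_avoiding_def)
  next
    case False
    then obtain b where b: "g \<in> edges G" "endp G g b = w"
      using g by (auto simp: cut_edges_def edges_avoiding_def)
    then have "(g, b) \<in> {d \<in> darts_at G w. (far_end G d \<in> X) \<noteq> (w \<in> X)}"
      using g by (cases b) (auto simp: darts_at_def far_end_def cut_edges_def)
    then have "fst (g, b) \<in> fst ` {d \<in> darts_at G w. (far_end G d \<in> X) \<noteq> (w \<in> X)}" by (rule imageI)
    then show ?thesis by simp
  qed
qed

lemma two_connected_cut_at_vertex: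
  assumes wf: "wf_graph G" and tc: "two_connected G"
    and X: "X \<subseteq> verts G" "X \<noteq> {}" "X \<noteq> verts G"
  shows "2 \<le> card (cut_edges G (X - {w}) \<inter> edges_avoiding G w)
    + card {d \<in> darts_at G w. (far_end G d \<in> X) \<noteq> (w \<in> X)}"
proof -
  let ?I = "cut_edges G (X - {w}) \<inter> edges_avoiding G w"
  let ?A = "{d \<in> darts_at G w. (far_end G d \<in> X) \<noteq> (w \<in> X)}"
  have fin: "finite ?I" "finite ?A" using finite_cut_edges[OF wf] finite_darts_at[OF wf] by auto
  have "2 \<le> card (cut_edges G X)" using two_connected_cut_edges[OF wf tc X] .
  also have "\<dots> \<le> card (?I \<union> fst ` ?A)"
    by (rule card_mono[OF _ cut_edges_subset_at_vertex]) (use fin in simp)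
  also have "\<dots> \<le> card ?I + card ?A" by (rule card_Un_image_le) (use fin in simp)
  finally show ?thesis .
qed

corollary two_connected_cut_minus_vertex:
  assumes "wf_graph G" "two_connected G" "w \<in> verts G" "T \<subseteq> verts G - {w}" "T \<noteq> {}"
  shows "2 \<le> card (cut_edges G T \<inter> edges_avoiding G w) + card {d \<in> darts_at G w. far_end G d \<in> T}"
proof -
  have "T - {w} = T" "w \<notin> T" using assms(4) by auto
  then show ?thesis using two_connected_cut_at_vertex[OF assms(1,2), of T w] assms(3-5) by auto
qed

corollary two_connected_cut_plus_vertex:
  assumes wf: "wf_graph G" and "cubic G" and tc: "two_connected G" and w: "w \<in> verts G"
    and T: "T \<subseteq> verts G - {w}" "T \<noteq> verts G - {w}"
  shows "2 \<le> card (cut_edges G T \<inter> edges_avoiding G w) + card {d \<in> darts_at G w. far_end G d \<notin> T}"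
proof -
  have "insert w T - {w} = T" using T(1) by auto
  moreover have "{d \<in> darts_at G w. (far_end G d \<in> insert w T) \<noteq> (w \<in> insert w T)} =
      {d \<in> darts_at G w. far_end G d \<notin> T}"
    using far_end_neq[OF wf assms(2) tc] by auto
  ultimately show ?thesis using two_connected_cut_at_vertex[OF wf tc, of "insert w T" w] w T by auto
qed

section \<open>Edge-colourings and perfect matchings\<close>

lemma card_ends_in:
  assumes finF: "finite F" and F: "F \<subseteq> edges G"
  shows "card {(g, b). g \<in> F \<and> endp G g b \<in> S} = 2 * card (F \<inter> inner_edges G S) + card (F \<inter> cut_edges G S)"
proof -
  define C where "C = {(g, b). g \<in> F \<inter> cut_edges G S \<and> endp G g b \<in> S}"
  have split: "{(g, b). g \<in> F \<and> endp G g b \<in> S} = (F \<inter> inner_edges G S) \<times> UNIV \<union> C"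
  proof (rule set_eqI, clarify)
    fix g b
    show "(g, b) \<in> {(g, b). g \<in> F \<and> endp G g b \<in> S} \<longleftrightarrow> (g, b) \<in> (F \<inter> inner_edges G S) \<times> UNIV \<union> C"
      using F by (cases b) (auto simp: C_def inner_edges_def cut_edges_def)
  qed
  have disj: "(F \<inter> inner_edges G S) \<times> UNIV \<inter> C = {}"
    by (auto simp: C_def inner_edges_def cut_edges_def)
  have "C \<subseteq> F \<times> UNIV" by (auto simp: C_def)
  moreover have "finite (F \<times> (UNIV :: bool set))" using finF by simp
  ultimately have finC: "finite C" by (rule finite_subset)
  have "bij_betw fst C (F \<inter> cut_edges G S)"
  proof (rule bij_betw_imageI)
    have same: "b = b'" if "(g, b) \<in> C" "(g, b') \<in> C" for g b b'
      using that by (cases b; cases b') (auto simp: C_def cut_edges_def)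
    show "inj_on fst C"
    proof (rule inj_onI)
      fix x y assume "x \<in> C" "y \<in> C" "fst x = fst y"
      then show "x = y" using same by (cases x; cases y) simp
    qed
    show "fst ` C = F \<inter> cut_edges G S"
    proof
      show "F \<inter> cut_edges G S \<subseteq> fst ` C"
      proof
        fix g assume g: "g \<in> F \<inter> cut_edges G S"
        then have "(g, True) \<in> C \<or> (g, False) \<in> C" by (auto simp: C_def cut_edges_def)
        then show "g \<in> fst ` C" by (metis fst_conv image_eqI)
      qed
    qed (auto simp: C_def)
  qed
  then have "card C = card (F \<inter> cut_edges G S)" by (rule bij_betw_same_card)
  then show ?thesis
    unfolding split using finF finC disj by (simp add: card_Un_disjoint card_cartesian_product)
qed

lemma card_ends_in_perfect_matching:
  assumes wf: "wf_graph G" and pm: "perfect_matching G M" and S: "S \<subseteq> verts G"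
  shows "card {(g, b). g \<in> M \<and> endp G g b \<in> S} = card S"
proof -
  have eq: "{(g, b). g \<in> M \<and> endp G g b \<in> S} = (\<Union>v\<in>S. {d \<in> darts_at G v. fst d \<in> M})"
    using pm by (auto simp: darts_at_def perfect_matching_def)
  have "finite S" using wf S finite_subset by (auto simp: wf_graph_def)
  then have "card {(g, b). g \<in> M \<and> endp G g b \<in> S} = (\<Sum>v\<in>S. card {d \<in> darts_at G v. fst d \<in> M})"
    unfolding eq using finite_darts_at[OF wf] by (intro card_UN_disjoint) (auto simp: darts_at_def)
  also have "\<dots> = (\<Sum>v\<in>S. 1)"
    using pm S by (intro sum.cong) (auto simp: perfect_matching_def)
  finally show ?thesis by simp
qed

lemma even_card_matching_cut_iff:
  assumes wf: "wf_graph G" and pm: "perfect_matching G M" and S: "S \<subseteq> verts G"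
  shows "even (card (M \<inter> cut_edges G S)) \<longleftrightarrow> even (card S)"
proof -
  have "M \<subseteq> edges G" using pm by (simp add: perfect_matching_def)
  moreover then have "finite M" using wf finite_subset by (auto simp: wf_graph_def)
  ultimately show ?thesis using card_ends_in[of M G S] card_ends_in_perfect_matching[OF assms] by simp
qed

definition three_edge_colouring :: "('v, 'e) mgraph \<Rightarrow> ('e \<Rightarrow> nat) \<Rightarrow> bool" where
  "three_edge_colouring G c \<longleftrightarrow> (\<forall>e\<in>edges G. c e < 3) \<and>
     (\<forall>v\<in>verts G. inj_on (\<lambda>d. c (fst d)) (darts_at G v))"

lemma three_edge_colourable_iff: "three_edge_colourable G \<longleftrightarrow> (\<exists>c. three_edge_colouring G c)"
  by (simp add: three_edge_colourable_def three_edge_colouring_def)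

lemma three_edge_colouringD:
  assumes "three_edge_colouring G c"
  shows "e \<in> edges G \<Longrightarrow> c e < 3" and "v \<in> verts G \<Longrightarrow> inj_on (\<lambda>d. c (fst d)) (darts_at G v)"
  using assms by (simp_all add: three_edge_colouring_def)

lemma colours_at_vertex:
  assumes cub: "cubic G" and col: "three_edge_colouring G c" and v: "v \<in> verts G"
  shows "(\<lambda>d. c (fst d)) ` darts_at G v = {0, 1, 2}"
proof -
  have c3: "card (darts_at G v) = 3" using cub v by (simp add: cubic_def)
  have inj: "inj_on (\<lambda>d. c (fst d)) (darts_at G v)" using col v by (simp add: three_edge_colouring_def)
  have sub: "(\<lambda>d. c (fst d)) ` darts_at G v \<subseteq> {0, 1, 2}"
    using col by (auto simp: three_edge_colouring_def darts_at_def)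
  have "card ((\<lambda>d. c (fst d)) ` darts_at G v) = 3" using card_image[OF inj] c3 by simp
  then show ?thesis using sub by (intro card_subset_eq) auto
qed

lemma perfect_matching_colour_class:
  assumes cub: "cubic G" and col: "three_edge_colouring G c" and j: "j < 3"
  shows "perfect_matching G {g \<in> edges G. c g = j}"
  unfolding perfect_matching_def
proof (intro conjI ballI)
  fix v assume v: "v \<in> verts G"
  have "j \<in> (\<lambda>d. c (fst d)) ` darts_at G v" using colours_at_vertex[OF cub col v] j by auto
  then obtain d0 where d0: "d0 \<in> darts_at G v" "c (fst d0) = j" by auto
  have inj: "inj_on (\<lambda>d. c (fst d)) (darts_at G v)" using col v by (simp add: three_edge_colouring_def)
  have "{d \<in> darts_at G v. fst d \<in> {g \<in> edges G. c g = j}} = {d0}"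
  proof (rule set_eqI, rule iffI)
    fix d assume "d \<in> {d \<in> darts_at G v. fst d \<in> {g \<in> edges G. c g = j}}"
    then show "d \<in> {d0}" using d0 inj_onD[OF inj] by auto
  qed (use d0 dart_in_edges[OF d0(1)] in auto)
  then show "card {d \<in> darts_at G v. fst d \<in> {g \<in> edges G. c g = j}} = 1" by simp
qed auto

lemma even_card_verts_three_edge_colouring:
  assumes "wf_graph G" "cubic G" "three_edge_colouring G c"
  shows "even (card (verts G))"
proof -
  have "cut_edges G (verts G) = {}" using assms(1) by (auto simp: cut_edges_def wf_graph_def)
  then show ?thesis
    using even_card_matching_cut_iff[OF assms(1) perfect_matching_colour_class[OF assms(2,3)]]
    by (metis card.empty even_zero inf_bot_right order_refl zero_less_numeral)
qed

lemma perfect_matching_dart_unique: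
  assumes "perfect_matching G M" "v \<in> verts G" "d1 \<in> darts_at G v" "d2 \<in> darts_at G v"
    "fst d1 \<in> M" "fst d2 \<in> M"
  shows "d1 = d2"
proof -
  have "card {d \<in> darts_at G v. fst d \<in> M} = 1" using assms by (simp add: perfect_matching_def)
  then obtain d0 where "{d \<in> darts_at G v. fst d \<in> M} = {d0}" by (rule card_1_singletonE)
  then show ?thesis using assms(3-6) by (metis (mono_tags, lifting) mem_Collect_eq singletonD)
qed

definition pm_cover :: "('v, 'e) mgraph \<Rightarrow> 'e set set \<Rightarrow> bool" where
  "pm_cover G S \<longleftrightarrow> finite S \<and> (\<forall>M\<in>S. perfect_matching G M) \<and> \<Union>S = edges G"

lemma pmi_le_card: "pm_cover G S \<Longrightarrow> pmi G \<le> enat (card S)"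
  unfolding pmi_def pm_cover_def by (rule Inf_lower) auto

lemma pmi_attained:
  assumes "pmi G = enat n" shows "\<exists>S. pm_cover G S \<and> card S = n"
proof -
  define A where "A = {enat (card S) | S. finite S \<and> (\<forall>M\<in>S. perfect_matching G M) \<and> \<Union>S = edges G}"
  have pA: "pmi G = Inf A" by (simp add: pmi_def A_def)
  have "A \<noteq> {}" using assms pA by (auto simp: Inf_enat_def)
  then have "Inf A \<in> A" unfolding Inf_enat_def by (auto intro: LeastI)
  then show ?thesis using assms pA by (auto simp: A_def pm_cover_def)
qed

lemma pm_cover_colour_classes:
  assumes cub: "cubic G" and col: "three_edge_colouring G c"
  shows "pm_cover G ((\<lambda>j. {g \<in> edges G. c g = j}) ` {0, 1, 2})"
  unfolding pm_cover_def
proof (intro conjI ballI)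
  show "\<Union>((\<lambda>j. {g \<in> edges G. c g = j}) ` {0, 1, 2}) = edges G"
    using col by (auto simp: three_edge_colouring_def less_Suc_eq numeral_3_eq_3)
qed (use perfect_matching_colour_class[OF cub col] in auto)

lemma three_edge_colourable_if_pm_cover:
  assumes cov: "pm_cover G S" and c3: "card S \<le> 3"
  shows "three_edge_colourable G"
proof -
  have finS: "finite S" using cov by (simp add: pm_cover_def)
  obtain \<nu> where nu: "\<nu> ` S \<subseteq> {..<3::nat}" "inj_on \<nu> S"
    using card_le_inj[OF finS, of "{..<3::nat}"] c3 by auto
  define M where "M g = (SOME M. M \<in> S \<and> g \<in> M)" for g
  have M: "M g \<in> S" "g \<in> M g" if "g \<in> edges G" for g
  proof -
    have "\<exists>M. M \<in> S \<and> g \<in> M" using cov that unfolding pm_cover_def by blast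
    then show "M g \<in> S" "g \<in> M g" unfolding M_def by (metis (mono_tags, lifting) someI_ex)+
  qed
  have "three_edge_colouring G (\<nu> \<circ> M)" unfolding three_edge_colouring_def
  proof (intro conjI ballI)
    fix e assume "e \<in> edges G"
    then show "(\<nu> \<circ> M) e < 3" using nu(1) M by auto
  next
    fix v assume v: "v \<in> verts G"
    show "inj_on (\<lambda>d. (\<nu> \<circ> M) (fst d)) (darts_at G v)"
    proof (rule inj_onI)
      fix d1 d2 assume d: "d1 \<in> darts_at G v" "d2 \<in> darts_at G v"
        and eq: "(\<nu> \<circ> M) (fst d1) = (\<nu> \<circ> M) (fst d2)"
      have e: "fst d1 \<in> edges G" "fst d2 \<in> edges G" using d by (simp_all add: dart_in_edges)
      then have "M (fst d1) = M (fst d2)" using inj_onD[OF nu(2)] M eq by simp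
      then have "fst d1 \<in> M (fst d1)" "fst d2 \<in> M (fst d1)" using M(2)[OF e(1)] M(2)[OF e(2)] by simp_all
      moreover have "perfect_matching G (M (fst d1))" using cov M e by (simp add: pm_cover_def)
      ultimately show "d1 = d2" using perfect_matching_dart_unique v d by metis
    qed
  qed
  then show ?thesis by (auto simp: three_edge_colourable_iff)
qed

lemma not_three_edge_colourable_iff_pmi_ge_4:
  assumes "cubic G"
  shows "\<not> three_edge_colourable G \<longleftrightarrow> 4 \<le> pmi G"
proof
  assume nc: "\<not> three_edge_colourable G"
  have "enat 4 \<le> pmi G" unfolding pmi_def
  proof (rule Inf_greatest, clarify)
    fix S assume "finite S" "\<forall>M\<in>S. perfect_matching G M" "\<Union>S = edges G"
    then have "pm_cover G S" by (simp add: pm_cover_def)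
    then show "enat 4 \<le> enat (card S)" using three_edge_colourable_if_pm_cover nc by fastforce
  qed
  then show "4 \<le> pmi G" by (simp add: numeral_eq_enat)
next
  assume pmi: "4 \<le> pmi G"
  show "\<not> three_edge_colourable G"
  proof
    assume "three_edge_colourable G"
    then obtain c where "three_edge_colouring G c" by (auto simp: three_edge_colourable_iff)
    then have "pmi G \<le> enat (card ((\<lambda>j. {g \<in> edges G. c g = j}) ` {0, 1, 2::nat}))"
      using pm_cover_colour_classes assms pmi_le_card by blast
    also have "\<dots> \<le> enat 3" by (subst enat_ord_simps(1), rule order.trans[OF card_image_le]) auto
    finally have "enat 4 \<le> enat 3" using pmi by (metis numeral_eq_enat order_trans)
    then show False by simp
  qed
qed

lemma pm_cover_obtain_matchings:
  assumes wf: "wf_graph G" and cub: "cubic G" and cov: "pm_cover G S" and g: "g \<in> edges G"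
  obtains M1 M2 M3 where "M1 \<in> S" "M2 \<in> S" "M3 \<in> S" "g \<in> M1" "g \<notin> M2" "g \<notin> M3" "M2 \<noteq> M3"
proof -
  have pm: "perfect_matching G M" if "M \<in> S" for M using cov that by (simp add: pm_cover_def)
  have covered: "\<exists>M\<in>S. h \<in> M" if "h \<in> edges G" for h using cov that by (auto simp: pm_cover_def)
  define x where "x = endp G g False"
  have x: "x \<in> verts G" using endp_in_verts[OF wf g] by (simp add: x_def)
  have gx: "(g, False) \<in> darts_at G x" using g by (simp add: x_def darts_at_def)
  have "card (darts_at G x - {(g, False)}) = 2" using cub x gx by (simp add: cubic_def)
  then obtain d2 d3 where d: "darts_at G x - {(g, False)} = {d2, d3}" "d2 \<noteq> d3"
    by (auto simp: card_2_iff)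
  have avoid: "\<exists>M\<in>S. fst d \<in> M \<and> g \<notin> M" if "d \<in> {d2, d3}" for d
  proof -
    have dx: "d \<in> darts_at G x" "d \<noteq> (g, False)" using that d(1) by blast+
    have "fst d \<in> edges G" using dx(1) by (rule dart_in_edges)
    then obtain M where M: "M \<in> S" "fst d \<in> M" using covered by blast
    have "g \<notin> M"
      using perfect_matching_dart_unique[OF pm[OF M(1)] x dx(1) gx] M(2) dx(2) by auto
    then show ?thesis using M by blast
  qed
  obtain M2 where M2: "M2 \<in> S" "fst d2 \<in> M2" "g \<notin> M2" using avoid by blast
  obtain M3 where M3: "M3 \<in> S" "fst d3 \<in> M3" "g \<notin> M3" using avoid by blast
  have "M2 \<noteq> M3"
  proof
    assume "M2 = M3"
    moreover have "d2 \<in> darts_at G x" "d3 \<in> darts_at G x" using d(1) by blast+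
    ultimately show False
      using perfect_matching_dart_unique[OF pm[OF M2(1)] x _ _ M2(2), of d3] M3(2) d(2) by simp
  qed
  obtain M1 where "M1 \<in> S" "g \<in> M1" using covered g by blast
  then show ?thesis using that M2 M3 \<open>M2 \<noteq> M3\<close> by simp
qed

section \<open>Inflating a vertex to a triangle\<close>

lemma inflate_simps [simp]:
  "verts (inflate G v f) = Inl ` (verts G - {v}) \<union> Inr ` {0, 1, 2}"
  "edges (inflate G v f) = Inl ` edges G \<union> Inr ` {0, 1, 2}"
  "endp (inflate G v f) (Inl e) b = (if endp G e b = v then Inr (f (e, b)) else Inl (endp G e b))"
  "endp (inflate G v f) (Inr i) b = Inr (if b then (i + 1) mod 3 else i)"
  by (simp_all add: inflate_def)

lemma wf_graph_inflate:
  assumes wf: "wf_graph G" and f: "f ` darts_at G v \<subseteq> {0, 1, 2}"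
  shows "wf_graph (inflate G v f)"
  unfolding wf_graph_def
proof (intro conjI ballI allI)
  show "finite (verts (inflate G v f))" "finite (edges (inflate G v f))"
    using wf by (simp_all add: wf_graph_def)
  fix x b assume x: "x \<in> edges (inflate G v f)"
  show "endp (inflate G v f) x b \<in> verts (inflate G v f)"
  proof (cases x)
    case (Inl e)
    then have e: "e \<in> edges G" using x by auto
    show ?thesis
    proof (cases "endp G e b = v")
      case True
      then have "(e, b) \<in> darts_at G v" using e by (simp add: darts_at_def)
      then have "f (e, b) \<in> {0, 1, 2}" using f by blast
      then have "Inr (f (e, b)) \<in> verts (inflate G v f)" by (simp only: inflate_simps) blast
      then show ?thesis using Inl True by simp
    next
      case False
      then show ?thesis using Inl e wf by (simp add: wf_graph_def)
    qed
  next
    case (Inr i)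
    then show ?thesis using x by auto
  qed
qed

definition lift_dart :: "'e \<times> bool \<Rightarrow> ('e + nat) \<times> bool" where
  "lift_dart d = (Inl (fst d), snd d)"

lemma inj_lift_dart: "inj lift_dart"
  by (auto simp: inj_on_def lift_dart_def prod_eq_iff)

lemma darts_at_inflate_Inl:
  fixes G :: "('v, 'e) mgraph"
  assumes "x \<noteq> v"
  shows "darts_at (inflate G v f) (Inl x) = lift_dart ` darts_at G x"
proof (rule set_eqI)
  fix d :: "('e + nat) \<times> bool"
  obtain y b where d: "d = (y, b)" by (cases d)
  show "d \<in> darts_at (inflate G v f) (Inl x) \<longleftrightarrow> d \<in> lift_dart ` darts_at G x"
    using assms unfolding d by (cases y) (auto simp: darts_at_def lift_dart_def image_iff)
qed

lemma darts_at_inflate_Inr: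
  fixes G :: "('v, 'e) mgraph"
  assumes j: "j \<in> {0, 1, 2}" and f: "bij_betw f (darts_at G v) {0, 1, 2}"
  shows "darts_at (inflate G v f) (Inr j) =
    {lift_dart (inv_into (darts_at G v) f j), (Inr j, False), (Inr ((j + 2) mod 3), True)}"
proof -
  define d0 where "d0 = inv_into (darts_at G v) f j"
  have fib: "{d \<in> darts_at G v. f d = j} = {d0}"
    using f j unfolding d0_def
    by (auto simp: bij_betw_def inv_into_into f_inv_into_f intro: bij_betw_inv_into_left[OF f, symmetric])
  show ?thesis unfolding d0_def[symmetric]
  proof (rule set_eqI)
    fix d :: "('e + nat) \<times> bool"
    obtain y b where d: "d = (y, b)" by (cases d)
    show "d \<in> darts_at (inflate G v f) (Inr j) \<longleftrightarrow>
        d \<in> {lift_dart d0, (Inr j, False), (Inr ((j + 2) mod 3), True)}"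
    proof (cases y)
      case (Inl e)
      have "(Inl e, b) \<in> darts_at (inflate G v f) (Inr j) \<longleftrightarrow> (e, b) \<in> {d \<in> darts_at G v. f d = j}"
        by (auto simp: darts_at_def)
      also have "\<dots> \<longleftrightarrow> (e, b) = d0" using fib by simp
      finally show ?thesis using d Inl by (cases d0) (auto simp: lift_dart_def)
    next
      case (Inr i)
      show ?thesis using j unfolding d Inr
        by (cases b; auto simp: darts_at_def lift_dart_def; presburger?)
    qed
  qed
qed

lemma cubic_inflate:
  assumes cub: "cubic G" and f: "bij_betw f (darts_at G v) {0, 1, 2}"
  shows "cubic (inflate G v f)"
  unfolding cubic_def
proof
  fix w assume w: "w \<in> verts (inflate G v f)"
  show "card (darts_at (inflate G v f) w) = 3"
  proof (cases w)
    case (Inl x)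
    then have x: "x \<in> verts G" "x \<noteq> v" using w by auto
    have "card (lift_dart ` darts_at G x) = card (darts_at G x)"
      by (rule card_image) (rule inj_on_subset[OF inj_lift_dart], simp)
    then show ?thesis unfolding Inl darts_at_inflate_Inl[OF x(2)] using cub x by (simp add: cubic_def)
  next
    case (Inr j)
    then have j: "j \<in> {0, 1, 2}" using w by auto
    show ?thesis unfolding Inr darts_at_inflate_Inr[OF j f] using j by (auto simp: lift_dart_def)
  qed
qed

lemma three_edge_colourable_inflate:
  assumes f: "bij_betw f (darts_at G v) {0, 1, 2}" and col: "three_edge_colouring G c"
    and v: "v \<in> verts G"
  shows "three_edge_colourable (inflate G v f)"
proof -
  define g where "g = inv_into (darts_at G v) f"
  define p where "p j = c (fst (g j))" for j
  have gin: "g j \<in> darts_at G v" if "j \<in> {0, 1, 2}" for j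
    using f that unfolding g_def by (metis bij_betw_def inv_into_into)
  have injc: "inj_on (\<lambda>d. c (fst d)) (darts_at G v)" using col v by (simp add: three_edge_colouring_def)
  have pinj: "p i \<noteq> p j" if "i \<in> {0, 1, 2}" "j \<in> {0, 1, 2}" "i \<noteq> j" for i j
  proof
    assume "p i = p j"
    then have "g i = g j" using inj_onD[OF injc _ gin[OF that(1)] gin[OF that(2)]] by (simp add: p_def)
    then show False using f that unfolding g_def by (metis bij_betw_inv_into_right)
  qed
  have p3: "p j < 3" if "j \<in> {0, 1, 2}" for j
    using col dart_in_edges[OF gin[OF that]] by (simp add: p_def three_edge_colouring_def)
  \<comment> \<open>the triangle edge opposite to the triangle vertex j gets the colour of the edge at j\<close>
  define c' where "c' x = (case x of Inl e \<Rightarrow> c e | Inr i \<Rightarrow> p ((i + 2) mod 3))" for x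
  have "three_edge_colouring (inflate G v f) c'" unfolding three_edge_colouring_def
  proof (intro conjI ballI)
    fix x assume "x \<in> edges (inflate G v f)"
    then show "c' x < 3" using col p3 by (auto simp: c'_def three_edge_colouring_def)
  next
    fix w assume w: "w \<in> verts (inflate G v f)"
    show "inj_on (\<lambda>d. c' (fst d)) (darts_at (inflate G v f) w)"
    proof (cases w)
      case (Inl x)
      then have x: "x \<in> verts G" "x \<noteq> v" using w by auto
      have "inj_on (\<lambda>d. c (fst d)) (darts_at G x)" using col x by (simp add: three_edge_colouring_def)
      then have "inj_on ((\<lambda>d. c' (fst d)) \<circ> lift_dart) (darts_at G x)"
        by (simp add: c'_def lift_dart_def comp_def)
      then show ?thesis unfolding Inl darts_at_inflate_Inl[OF x(2)] by (rule inj_on_imageI)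
    next
      case (Inr j)
      then have j: "j \<in> {0, 1, 2}" using w by auto
      have "inj_on (\<lambda>d. c' (fst d)) {lift_dart (g j), (Inr j, False), (Inr ((j + 2) mod 3), True)}"
        using j pinj[of 0 1] pinj[of 0 2] pinj[of 1 2]
        by (auto simp: inj_on_def c'_def p_def[symmetric] lift_dart_def numeral_2_eq_2[symmetric])
      then show ?thesis unfolding Inr darts_at_inflate_Inr[OF j f] g_def .
    qed
  qed
  then show ?thesis by (auto simp: three_edge_colourable_iff)
qed

definition inflate_dart_map ::
    "('e1 \<times> bool \<Rightarrow> 'e2 \<times> bool) \<Rightarrow> ('e1 + nat) \<times> bool \<Rightarrow> ('e2 + nat) \<times> bool" where
  "inflate_dart_map \<phi> d = (case fst d of Inl g \<Rightarrow> lift_dart (\<phi> (g, snd d)) | Inr i \<Rightarrow> (Inr i, snd d))"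

lemma inflate_dart_map_simps [simp]:
  "inflate_dart_map \<phi> (lift_dart d) = lift_dart (\<phi> d)"
  "inflate_dart_map \<phi> (Inr i, b) = (Inr i, b)"
  by (simp_all add: inflate_dart_map_def lift_dart_def)

lemma bij_betw_lift_dart_image:
  assumes "bij_betw \<phi> A B"
  shows "bij_betw (inflate_dart_map \<phi>) (lift_dart ` A) (lift_dart ` B)"
  unfolding bij_betw_def
proof
  show "inj_on (inflate_dart_map \<phi>) (lift_dart ` A)"
  proof (rule inj_onI)
    fix x y assume "x \<in> lift_dart ` A" "y \<in> lift_dart ` A"
      and eq: "inflate_dart_map \<phi> x = inflate_dart_map \<phi> y"
    then obtain a1 a2 where a: "a1 \<in> A" "a2 \<in> A" "x = lift_dart a1" "y = lift_dart a2" by blast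
    then have "\<phi> a1 = \<phi> a2" using eq injD[OF inj_lift_dart] by simp
    then show "x = y" using a assms by (metis bij_betw_inv_into_left)
  qed
  show "inflate_dart_map \<phi> ` lift_dart ` A = lift_dart ` B"
    using assms by (force simp: bij_betw_def)
qed

lemma inflate_dart_bijections:
  fixes H :: "('v1, 'e1) mgraph" and G :: "('v2, 'e2) mgraph"
  assumes bij: "\<And>x. x \<in> X \<Longrightarrow> bij_betw \<phi> (darts_at H x) (darts_at G (hv x))"
    and hv: "inj_on hv X" and u: "u \<in> X"
    and fH: "bij_betw fH (darts_at H u) {0, 1, 2}"
    and fG: "\<And>d. d \<in> darts_at H u \<Longrightarrow> fG (\<phi> d) = fH d"
  shows "bij_betw fG (darts_at G (hv u)) {0, 1, 2}"
    and "\<And>x. x \<in> X \<Longrightarrow> x \<noteq> u \<Longrightarrow> bij_betw (inflate_dart_map \<phi>)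
          (darts_at (inflate H u fH) (Inl x)) (darts_at (inflate G (hv u) fG) (Inl (hv x)))"
    and "\<And>j. j \<in> {0, 1, 2} \<Longrightarrow> bij_betw (inflate_dart_map \<phi>)
          (darts_at (inflate H u fH) (Inr j)) (darts_at (inflate G (hv u) fG) (Inr j))"
proof -
  have bu: "bij_betw \<phi> (darts_at H u) (darts_at G (hv u))" using bij u .
  have "bij_betw (fG \<circ> \<phi>) (darts_at H u) {0, 1, 2}"
    using fH fG by (metis (mono_tags, lifting) bij_betw_cong comp_apply)
  then show fGb: "bij_betw fG (darts_at G (hv u)) {0, 1, 2}"
    using bij_betw_comp_iff[OF bu] by blast
  show "bij_betw (inflate_dart_map \<phi>)
      (darts_at (inflate H u fH) (Inl x)) (darts_at (inflate G (hv u) fG) (Inl (hv x)))"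
    if x: "x \<in> X" "x \<noteq> u" for x
  proof -
    have "hv x \<noteq> hv u" using x u hv by (auto simp: inj_on_def)
    then show ?thesis unfolding darts_at_inflate_Inl[OF x(2)] darts_at_inflate_Inl[OF \<open>hv x \<noteq> hv u\<close>]
      using bij_betw_lift_dart_image[OF bij[OF x(1)]] by simp
  qed
  show "bij_betw (inflate_dart_map \<phi>)
      (darts_at (inflate H u fH) (Inr j)) (darts_at (inflate G (hv u) fG) (Inr j))"
    if j: "j \<in> {0, 1, 2}" for j
  proof -
    define dH where "dH = inv_into (darts_at H u) fH j"
    have dH: "dH \<in> darts_at H u" "fH dH = j"
      using fH j unfolding dH_def by (auto simp: bij_betw_def inv_into_into f_inv_into_f)
    then have "\<phi> dH \<in> darts_at G (hv u)" "fG (\<phi> dH) = j" using bu fG by (auto simp: bij_betw_def)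
    then have dG: "inv_into (darts_at G (hv u)) fG j = \<phi> dH" using fGb by (metis bij_betw_inv_into_left)
    have c3: "card {lift_dart d, (Inr j, False), (Inr ((j + 2) mod 3), True)} = 3" for d :: "'x \<times> bool"
      by (simp add: lift_dart_def)
    show ?thesis unfolding darts_at_inflate_Inr[OF j fH] darts_at_inflate_Inr[OF j fGb] dG dH_def[symmetric]
      by (rule bij_betw_if_card_3) (simp, rule c3, rule c3)
  qed
qed

lemma apexI:
  assumes "wf_graph G" "cubic G" "two_connected G" "v \<in> verts G"
    and f: "bij_betw f (darts_at G v) {0, 1, 2}"
    and nc: "\<not> three_edge_colourable (inflate G v f)" and pmi: "pmi (inflate G v f) \<le> 4"
  shows "apex G v"
proof -
  have "\<not> three_edge_colourable G"
    using three_edge_colourable_inflate[OF f _ assms(4)] nc by (auto simp: three_edge_colourable_iff)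
  moreover have "pmi (inflate G v f) = 4"
    using pmi nc not_three_edge_colourable_iff_pmi_ge_4[OF cubic_inflate[OF assms(2) f]] by simp
  ultimately show ?thesis using assms(1-4) f by (auto simp: apex_def snark_def)
qed

text \<open>Both sums are instances, with X all of H for the 2-sum and H without its distinguished
  vertex for the 3-sum.\<close>

locale inflation_transfer =
  fixes H :: "('v1, 'e1) mgraph" and G :: "('v1 + 'v2, 'e) mgraph"
    and \<phi> :: "'e1 \<times> bool \<Rightarrow> 'e \<times> bool" and X :: "'v1 set"
    and u :: 'v1 and fH :: "'e1 \<times> bool \<Rightarrow> nat"
  assumes wf_H: "wf_graph H" and cubic_H: "cubic H" and wf_G: "wf_graph G" and cubic_G: "cubic G"
    and inj_\<phi>: "inj \<phi>"
    and bij_\<phi>: "\<And>x. x \<in> X \<Longrightarrow> bij_betw \<phi> (darts_at H x) (darts_at G (Inl x))"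
    and X: "X \<subseteq> verts H" and u: "u \<in> X"
    and fH: "bij_betw fH (darts_at H u) {0, 1, 2}" and pmi_Hu: "pmi (inflate H u fH) = 4"
begin

definition fG :: "'e \<times> bool \<Rightarrow> nat" where
  "fG = fH \<circ> inv \<phi>"

abbreviation "Hu \<equiv> inflate H u fH"
abbreviation "Gu \<equiv> inflate G (Inl u) fG"

lemma fG_\<phi>: "fG (\<phi> d) = fH d"
  by (simp add: fG_def inv_f_f[OF inj_\<phi>])

lemmas inflate_bijections =
  inflate_dart_bijections[where hv = Inl, OF bij_\<phi> inj_on_subset[OF inj_Inl subset_UNIV] u fH fG_\<phi>]

lemma bij_betw_fG: "bij_betw fG (darts_at G (Inl u)) {0, 1, 2}"
  using inflate_bijections(1) .

lemma bij_betw_darts_Gu: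
  assumes "w \<in> verts Hu" "w \<notin> Inl ` (verts H - X)"
  shows "bij_betw (inflate_dart_map \<phi>) (darts_at Hu w) (darts_at Gu (map_sum Inl id w))"
  using assms inflate_bijections(2,3) by (cases w) auto

lemma Inl_in_verts_G: "x \<in> X \<Longrightarrow> Inl x \<in> verts G"
proof -
  assume x: "x \<in> X"
  then have "card (darts_at H x) = 3" using cubic_H X by (auto simp: cubic_def)
  then have "darts_at G (Inl x) \<noteq> {}" using bij_betw_same_card[OF bij_\<phi>[OF x]] by auto
  then obtain g b where "(g, b) \<in> darts_at G (Inl x)" by auto
  then show "Inl x \<in> verts G" using endp_in_verts[OF wf_G, of g b] by (simp add: darts_at_def)
qed

lemma map_sum_in_verts_Gu:
  "w \<in> verts Hu \<Longrightarrow> w \<notin> Inl ` (verts H - X) \<Longrightarrow> map_sum Inl id w \<in> verts Gu"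
  using Inl_in_verts_G by (cases w) auto

lemma inj_on_colours_Hu:
  assumes col: "three_edge_colouring Gu cG" and w: "w \<in> verts Hu" "w \<notin> Inl ` (verts H - X)"
    and cH: "\<And>d. d \<in> darts_at Hu w \<Longrightarrow> cH (fst d) = cG (fst (inflate_dart_map \<phi> d))"
  shows "inj_on (\<lambda>d. cH (fst d)) (darts_at Hu w)"
  using inj_on_bij_betw_comp[OF bij_betw_darts_Gu[OF w] cH
      three_edge_colouringD(2)[OF col map_sum_in_verts_Gu[OF w]]] .

lemma perfect_matching_card_Gu:
  assumes M: "perfect_matching Hu M" and w: "w \<in> verts Hu" "w \<notin> Inl ` (verts H - X)"
    and L: "\<And>d. d \<in> darts_at Hu w \<Longrightarrow> fst d \<in> M \<longleftrightarrow> fst (inflate_dart_map \<phi> d) \<in> L"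
  shows "card {d \<in> darts_at Gu (map_sum Inl id w). fst d \<in> L} = 1"
proof -
  have "card {d \<in> darts_at Hu w. fst d \<in> M} = 1" using M w(1) unfolding perfect_matching_def by blast
  moreover have "card {d \<in> darts_at Hu w. fst d \<in> M} = card {d \<in> darts_at Gu (map_sum Inl id w). fst d \<in> L}"
    by (rule card_Collect_bij_betw[OF bij_betw_darts_Gu[OF w]]) (rule L)
  ultimately show ?thesis by simp
qed

lemma wf_graph_Gu: "wf_graph Gu"
  using wf_graph_inflate[OF wf_G] bij_betw_fG by (simp add: bij_betw_def)

lemma cubic_Gu: "cubic Gu" using cubic_inflate[OF cubic_G bij_betw_fG] .

lemma wf_graph_Hu: "wf_graph Hu" using wf_graph_inflate[OF wf_H] fH by (simp add: bij_betw_def)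

lemma cubic_Hu: "cubic Hu" using cubic_inflate[OF cubic_H fH] .

lemma not_colourable_Hu: "\<not> three_edge_colourable Hu"
  using not_three_edge_colourable_iff_pmi_ge_4[OF cubic_Hu] pmi_Hu by simp

lemma apex_Inl_u:
  assumes "two_connected G" "\<not> three_edge_colourable Gu" "pmi Gu \<le> 4"
  shows "apex G (Inl u)"
  by (rule apexI[OF wf_G cubic_G assms(1) Inl_in_verts_G[OF u] bij_betw_fG assms(2,3)])

end

section \<open>2-sums\<close>

lemma two_sum_simps [simp]:
  "verts (two_sum H K e f p) = Inl ` verts H \<union> Inr ` verts K"
  "edges (two_sum H K e f p) = Inl ` Inl ` (edges H - {e}) \<union> Inl ` Inr ` (edges K - {f}) \<union> range Inr"
  "endp (two_sum H K e f p) (Inl (Inl g)) b = Inl (endp H g b)"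
  "endp (two_sum H K e f p) (Inl (Inr k)) b = Inr (endp K k b)"
  "endp (two_sum H K e f p) (Inr c) b = (if b then Inr (endp K f (c = p)) else Inl (endp H e c))"
  by (simp_all add: two_sum_def)

locale two_sum_graphs =
  fixes H :: "('v1, 'e1) mgraph" and K :: "('v2, 'e2) mgraph"
    and e :: 'e1 and f :: 'e2 and p :: bool
  assumes wf_H: "wf_graph H" and cubic_H: "cubic H" and two_connected_H: "two_connected H"
    and wf_K: "wf_graph K" and cubic_K: "cubic K" and two_connected_K: "two_connected K"
    and e: "e \<in> edges H" and f: "f \<in> edges K"
begin

abbreviation "G \<equiv> two_sum H K e f p"

text \<open>The darts of e become the H-ends of the new edges, those of f their K-ends.\<close>

definition dart_H :: "'e1 \<times> bool \<Rightarrow> (('e1 + 'e2) + bool) \<times> bool" where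
  "dart_H d = (if fst d = e then (Inr (snd d), False) else (Inl (Inl (fst d)), snd d))"

definition dart_K :: "'e2 \<times> bool \<Rightarrow> (('e1 + 'e2) + bool) \<times> bool" where
  "dart_K d = (if fst d = f then (Inr (snd d = p), True) else (Inl (Inr (fst d)), snd d))"

lemma inj_dart_H: "inj dart_H"
  unfolding inj_def dart_H_def by (auto simp: prod_eq_iff split: if_splits)

lemma inj_dart_K: "inj dart_K"
  unfolding inj_def dart_K_def by (auto simp: prod_eq_iff split: if_splits)

lemma darts_at_Inl: "darts_at G (Inl x) = dart_H ` darts_at H x"
proof (rule set_eqI)
  fix d :: "(('e1 + 'e2) + bool) \<times> bool"
  obtain z b where d: "d = (z, b)" by (cases d)
  show "d \<in> darts_at G (Inl x) \<longleftrightarrow> d \<in> dart_H ` darts_at H x"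
  proof (cases z)
    case (Inl z1)
    show ?thesis
    proof (cases z1)
      case (Inl g)
      have "(Inl (Inl g), b) = dart_H (g', b') \<longleftrightarrow> g' = g \<and> b' = b \<and> g \<noteq> e" for g' b'
        by (auto simp: dart_H_def)
      then show ?thesis unfolding d \<open>z = Inl z1\<close> Inl
        by (auto simp: darts_at_def image_iff)
    next
      case (Inr k)
      have "(Inl (Inr k), b) \<noteq> dart_H d'" for d' by (auto simp: dart_H_def)
      then show ?thesis unfolding d \<open>z = Inl z1\<close> Inr
        by (auto simp: darts_at_def image_iff)
    qed
  next
    case (Inr c)
    have "(Inr c, b) = dart_H (g', b') \<longleftrightarrow> g' = e \<and> b' = c \<and> \<not> b" for g' b'
      by (auto simp: dart_H_def)
    then show ?thesis unfolding d Inr using e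
      by (auto simp: darts_at_def image_iff)
  qed
qed

lemma darts_at_Inr: "darts_at G (Inr y) = dart_K ` darts_at K y"
proof (rule set_eqI)
  fix d :: "(('e1 + 'e2) + bool) \<times> bool"
  obtain z b where d: "d = (z, b)" by (cases d)
  show "d \<in> darts_at G (Inr y) \<longleftrightarrow> d \<in> dart_K ` darts_at K y"
  proof (cases z)
    case (Inl z1)
    show ?thesis
    proof (cases z1)
      case (Inr k)
      have "(Inl (Inr k), b) = dart_K (g', b') \<longleftrightarrow> g' = k \<and> b' = b \<and> k \<noteq> f" for g' b'
        by (auto simp: dart_K_def)
      then show ?thesis unfolding d \<open>z = Inl z1\<close> Inr
        by (auto simp: darts_at_def image_iff)
    next
      case (Inl g)
      have "(Inl (Inl g), b) \<noteq> dart_K d'" for d' by (auto simp: dart_K_def)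
      then show ?thesis unfolding d \<open>z = Inl z1\<close> Inl
        by (auto simp: darts_at_def image_iff)
    qed
  next
    case (Inr c)
    have "(Inr c, b) = dart_K (g', b') \<longleftrightarrow> g' = f \<and> b' = (c = p) \<and> b" for g' b'
      unfolding dart_K_def by auto
    then show ?thesis unfolding d Inr using f
      by (auto simp: darts_at_def image_iff)
  qed
qed

lemma bij_betw_dart_H: "bij_betw dart_H (darts_at H x) (darts_at G (Inl x))"
  by (simp add: bij_betw_def darts_at_Inl inj_on_subset[OF inj_dart_H])

lemma bij_betw_dart_K: "bij_betw dart_K (darts_at K y) (darts_at G (Inr y))"
  by (simp add: bij_betw_def darts_at_Inr inj_on_subset[OF inj_dart_K])

lemma wf_graph_two_sum: "wf_graph G"
  using wf_H wf_K e f unfolding wf_graph_def by auto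

lemma cubic_two_sum: "cubic G"
  unfolding cubic_def
proof
  fix w assume "w \<in> verts G"
  then consider (H) x where "x \<in> verts H" "w = Inl x" | (K) y where "y \<in> verts K" "w = Inr y" by auto
  then show "card (darts_at G w) = 3"
  proof cases
    case H then show ?thesis using bij_betw_same_card[OF bij_betw_dart_H] cubic_H by (simp add: cubic_def)
  next
    case K then show ?thesis using bij_betw_same_card[OF bij_betw_dart_K] cubic_K by (simp add: cubic_def)
  qed
qed

lemma cut_edges_two_sum_Inl:
  "g \<in> cut_edges H (Inl -` S) \<Longrightarrow> g \<noteq> e \<Longrightarrow> Inl (Inl g) \<in> cut_edges G S"
  by (simp add: cut_edges_def)

lemma cut_edges_two_sum_Inr:
  "k \<in> cut_edges K (Inr -` S) \<Longrightarrow> k \<noteq> f \<Longrightarrow> Inl (Inr k) \<in> cut_edges G S"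
  by (simp add: cut_edges_def)

lemma new_edge_in_cut_edges_iff:
  "Inr c \<in> cut_edges G S \<longleftrightarrow> (endp H e c \<in> Inl -` S) \<noteq> (endp K f (c = p) \<in> Inr -` S)"
  by (simp add: cut_edges_def)

lemma two_sum_cut_H_side:
  assumes S: "S \<subseteq> verts G" "Inl -` S \<noteq> {}" "Inl -` S \<noteq> verts H"
    and K: "\<And>b. endp K f b \<in> Inr -` S \<longleftrightarrow> t"
  shows "2 \<le> card (cut_edges G S)"
proof -
  have fin: "finite (cut_edges G S)" using finite_cut_edges[OF wf_graph_two_sum] .
  have "Inl -` S \<subseteq> verts H" using S(1) by auto
  then have cut: "2 \<le> card (cut_edges H (Inl -` S))"
    using two_connected_cut_edges[OF wf_H two_connected_H _ S(2,3)] by blast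
  obtain g where g: "g \<in> cut_edges H (Inl -` S)" "g \<noteq> e"
    using two_le_card_ex_other[OF cut] by blast
  show ?thesis
  proof (cases "e \<in> cut_edges H (Inl -` S)")
    case True
    then have "\<exists>c. Inr c \<in> cut_edges G S"
      using K by (cases "endp H e False \<in> Inl -` S \<longleftrightarrow> t") (auto simp: new_edge_in_cut_edges_iff cut_edges_def)
    then obtain c where "Inr c \<in> cut_edges G S" by blast
    then show ?thesis using two_le_cardI[OF fin, of "Inr c" "Inl (Inl g)"] cut_edges_two_sum_Inl[OF g] by simp
  next
    case False
    obtain g' where "g' \<in> cut_edges H (Inl -` S)" "g' \<noteq> g"
      using two_le_card_ex_other[OF cut] by blast
    then show ?thesis
      using two_le_cardI[OF fin, of "Inl (Inl g)" "Inl (Inl g')"] cut_edges_two_sum_Inl g False by auto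
  qed
qed

lemma two_sum_cut_K_side:
  assumes S: "S \<subseteq> verts G" "Inr -` S \<noteq> {}" "Inr -` S \<noteq> verts K"
    and H: "\<And>b. endp H e b \<in> Inl -` S \<longleftrightarrow> t"
  shows "2 \<le> card (cut_edges G S)"
proof -
  have fin: "finite (cut_edges G S)" using finite_cut_edges[OF wf_graph_two_sum] .
  have "Inr -` S \<subseteq> verts K" using S(1) by auto
  then have cut: "2 \<le> card (cut_edges K (Inr -` S))"
    using two_connected_cut_edges[OF wf_K two_connected_K _ S(2,3)] by blast
  obtain k where k: "k \<in> cut_edges K (Inr -` S)" "k \<noteq> f"
    using two_le_card_ex_other[OF cut] by blast
  show ?thesis
  proof (cases "f \<in> cut_edges K (Inr -` S)")
    case True
    then have "Inr p \<in> cut_edges G S \<or> Inr (\<not> p) \<in> cut_edges G S"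
      using H by (cases "endp K f False \<in> Inr -` S \<longleftrightarrow> t") (auto simp: new_edge_in_cut_edges_iff cut_edges_def)
    then obtain c where "Inr c \<in> cut_edges G S" by blast
    then show ?thesis using two_le_cardI[OF fin, of "Inr c" "Inl (Inr k)"] cut_edges_two_sum_Inr[OF k] by simp
  next
    case False
    obtain k' where "k' \<in> cut_edges K (Inr -` S)" "k' \<noteq> k"
      using two_le_card_ex_other[OF cut] by blast
    then show ?thesis
      using two_le_cardI[OF fin, of "Inl (Inr k)" "Inl (Inr k')"] cut_edges_two_sum_Inr k False by auto
  qed
qed

lemma two_connected_two_sum: "two_connected G"
proof (rule two_connectedI_cut_edges[OF wf_graph_two_sum])
  show "verts G \<noteq> {}" using two_connected_H by (simp add: two_connected_def connected_graph_def)
  fix S assume S: "S \<subseteq> verts G" "S \<noteq> {}" "S \<noteq> verts G"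
  have fin: "finite (cut_edges G S)" using finite_cut_edges[OF wf_graph_two_sum] .
  have S_eq: "S = Inl ` (Inl -` S) \<union> Inr ` (Inr -` S)"
  proof (rule set_eqI)
    fix x show "x \<in> S \<longleftrightarrow> x \<in> Inl ` (Inl -` S) \<union> Inr ` (Inr -` S)" by (cases x) auto
  qed
  have const_H: "endp H e b \<in> Inl -` S \<longleftrightarrow> Inl -` S \<noteq> {}" if "Inl -` S = {} \<or> Inl -` S = verts H" for b
    using that endp_in_verts[OF wf_H e] by auto
  have const_K: "endp K f b \<in> Inr -` S \<longleftrightarrow> Inr -` S \<noteq> {}" if "Inr -` S = {} \<or> Inr -` S = verts K" for b
    using that endp_in_verts[OF wf_K f] by auto
  consider (HK) "Inl -` S \<noteq> {}" "Inl -` S \<noteq> verts H" "Inr -` S \<noteq> {}" "Inr -` S \<noteq> verts K"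
    | (H) "Inl -` S \<noteq> {}" "Inl -` S \<noteq> verts H" "Inr -` S = {} \<or> Inr -` S = verts K"
    | (K) "Inl -` S = {} \<or> Inl -` S = verts H" "Inr -` S \<noteq> {}" "Inr -` S \<noteq> verts K"
    | (none) "Inl -` S = {} \<or> Inl -` S = verts H" "Inr -` S = {} \<or> Inr -` S = verts K"
    by blast
  then show "2 \<le> card (cut_edges G S)"
  proof cases
    case HK
    have "Inl -` S \<subseteq> verts H" "Inr -` S \<subseteq> verts K" using S(1) by auto
    then have "2 \<le> card (cut_edges H (Inl -` S))" "2 \<le> card (cut_edges K (Inr -` S))"
      using two_connected_cut_edges[OF wf_H two_connected_H _ HK(1,2)]
        two_connected_cut_edges[OF wf_K two_connected_K _ HK(3,4)] by blast+
    then obtain g k where "g \<in> cut_edges H (Inl -` S)" "g \<noteq> e" "k \<in> cut_edges K (Inr -` S)" "k \<noteq> f"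
      using two_le_card_ex_other[of "cut_edges H (Inl -` S)" e]
        two_le_card_ex_other[of "cut_edges K (Inr -` S)" f] by blast
    then show ?thesis
      using two_le_cardI[OF fin, of "Inl (Inl g)" "Inl (Inr k)"] cut_edges_two_sum_Inl cut_edges_two_sum_Inr
      by simp
  next
    case H
    show ?thesis by (rule two_sum_cut_H_side[OF S(1) H(1,2) const_K[OF H(3)]])
  next
    case K
    show ?thesis by (rule two_sum_cut_K_side[OF S(1) K(2,3) const_H[OF K(1)]])
  next
    case none
    have "Inl -` S = {} \<longleftrightarrow> Inr -` S \<noteq> {}"
    proof
      assume "Inl -` S = {}" then show "Inr -` S \<noteq> {}" using S(2) S_eq by (metis Un_empty_left image_empty)
    next
      assume "Inr -` S \<noteq> {}"
      then have "Inr -` S = verts K" using none by blast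
      show "Inl -` S = {}"
      proof (rule ccontr)
        assume "Inl -` S \<noteq> {}"
        then have "Inl -` S = verts H" using none by blast
        then have "S = verts G" using S_eq \<open>Inr -` S = verts K\<close> by simp
        then show False using S(3) by blast
      qed
    qed
    then have "Inr True \<in> cut_edges G S" "Inr False \<in> cut_edges G S"
      using const_H[OF none(1)] const_K[OF none(2)] unfolding new_edge_in_cut_edges_iff by auto
    then show ?thesis by (rule two_le_cardI[OF fin]) simp
  qed
qed

end

locale two_sum_apex = two_sum_graphs H K e f p
  for H :: "('v1, 'e1) mgraph" and K :: "('v2, 'e2) mgraph" and e f p +
  fixes u :: 'v1 and fH :: "'e1 \<times> bool \<Rightarrow> nat" and c :: "'e2 \<Rightarrow> nat"
  assumes u: "u \<in> verts H" and fH: "bij_betw fH (darts_at H u) {0, 1, 2}"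
    and pmi_Hu: "pmi (inflate H u fH) = 4" and colouring_K: "three_edge_colouring K c"
begin

sublocale inflation_transfer H G dart_H "verts H" u fH
  using wf_H cubic_H wf_graph_two_sum cubic_two_sum inj_dart_H bij_betw_dart_H u fH pmi_Hu
  by unfold_locales auto

lemma bij_betw_darts_Gu_Inl_Inr:
  "bij_betw (lift_dart \<circ> dart_K) (darts_at K y) (darts_at Gu (Inl (Inr y)))"
proof -
  have "darts_at Gu (Inl (Inr y)) = (lift_dart \<circ> dart_K) ` darts_at K y"
    by (simp add: darts_at_inflate_Inl darts_at_Inr image_comp)
  moreover have "inj_on (lift_dart \<circ> dart_K) (darts_at K y)"
    using inj_compose[OF inj_lift_dart inj_dart_K] by (rule inj_on_subset) simp
  ultimately show ?thesis by (simp add: bij_betw_def)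
qed

lemma verts_Gu_cases:
  assumes "w \<in> verts Gu"
  obtains (K) y where "y \<in> verts K" "w = Inl (Inr y)"
    | (H) w' where "w' \<in> verts Hu" "w = map_sum Inl id w'"
proof -
  from assms consider (K) y where "y \<in> verts K" "w = Inl (Inr y)"
    | (H) x where "x \<in> verts H" "x \<noteq> u" "w = Inl (Inl x)" | (T) j where "j \<in> {0, 1, 2}" "w = Inr j"
    by auto
  then show thesis
  proof cases
    case (K y) then show ?thesis by (rule that(1))
  next
    case (H x) show ?thesis by (rule that(2)[of "Inl x"]) (use H in auto)
  next
    case (T j) show ?thesis by (rule that(2)[of "Inr j"]) (use T in auto)
  qed
qed

lemma fst_inflate_dart_map_dart_H:
  "fst (inflate_dart_map dart_H (x, b)) =
    (case x of Inl g \<Rightarrow> Inl (if g = e then Inr b else Inl (Inl g)) | Inr i \<Rightarrow> Inr i)"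
  by (cases x) (simp_all add: inflate_dart_map_def lift_dart_def dart_H_def)

lemma cut_edges_Gu_K: "cut_edges Gu (Inl ` Inr ` verts K) = {Inl (Inr False), Inl (Inr True)}"
proof (rule set_eqI)
  fix x :: "(('e1 + 'e2) + bool) + nat"
  have ends: "endp H e b \<in> verts H" "endp K f b \<in> verts K" for b
    using endp_in_verts[OF wf_H e] endp_in_verts[OF wf_K f] by simp_all
  have "endp K k b \<in> verts K" if "k \<in> edges K" for k b using endp_in_verts[OF wf_K that] .
  then show "x \<in> cut_edges Gu (Inl ` Inr ` verts K) \<longleftrightarrow> x \<in> {Inl (Inr False), Inl (Inr True)}"
    using ends by (cases x rule: sum.exhaust[case_product sum.exhaust])
      (auto simp: cut_edges_def split: sum.splits)
qed

text \<open>Since K has an even number of vertices, every colour class of a colouring of Gu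
  meets the 2-edge-cut around K in an even number of edges.\<close>

lemma new_edges_same_colour:
  assumes col: "three_edge_colouring Gu cG"
  shows "cG (Inl (Inr True)) = cG (Inl (Inr False))"
proof -
  define M where "M = {g \<in> edges Gu. cG g = cG (Inl (Inr False))}"
  have "Inr False \<in> edges G" unfolding two_sum_simps by (intro UnI2 rangeI)
  then have new: "Inl (Inr False) \<in> edges Gu" unfolding inflate_simps by (rule UnI1[OF imageI])
  then have "cG (Inl (Inr False)) < 3" by (rule three_edge_colouringD(1)[OF col])
  then have pm: "perfect_matching Gu M" unfolding M_def by (rule perfect_matching_colour_class[OF cubic_Gu col])
  have "card (Inl ` Inr ` verts K :: ((('v1 + 'v2) + nat) set)) = card (verts K)"
    by (simp add: card_image inj_on_def)
  moreover have "Inl ` Inr ` verts K \<subseteq> verts Gu" by auto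
  ultimately have "even (card (M \<inter> cut_edges Gu (Inl ` Inr ` verts K)))"
    using even_card_matching_cut_iff[OF wf_graph_Gu pm]
      even_card_verts_three_edge_colouring[OF wf_K cubic_K colouring_K] by auto
  moreover have "Inl (Inr False) \<in> M" using new by (simp add: M_def)
  ultimately have "Inl (Inr True) \<in> M" unfolding cut_edges_Gu_K
    by (cases "Inl (Inr True) \<in> M") (auto simp: Int_insert_right)
  then show ?thesis by (simp add: M_def)
qed

lemma not_colourable_Gu: "\<not> three_edge_colourable Gu"
proof
  assume "three_edge_colourable Gu"
  then obtain cG where col: "three_edge_colouring Gu cG" by (auto simp: three_edge_colourable_iff)
  define cH where "cH x = cG (fst (inflate_dart_map dart_H (x, False)))" for x
  have cH: "cH (fst d) = cG (fst (inflate_dart_map dart_H d))" for d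
    using new_edges_same_colour[OF col]
    by (cases d; cases "fst d"; cases "snd d") (auto simp: cH_def fst_inflate_dart_map_dart_H)
  have "three_edge_colouring Hu cH" unfolding three_edge_colouring_def
  proof (intro conjI ballI)
    fix x assume "x \<in> edges Hu"
    then have "fst (inflate_dart_map dart_H (x, False)) \<in> edges Gu"
      by (cases x) (auto simp: fst_inflate_dart_map_dart_H image_iff)
    then show "cH x < 3" unfolding cH_def by (rule three_edge_colouringD(1)[OF col])
  next
    fix w assume w: "w \<in> verts Hu"
    then show "inj_on (\<lambda>d. cH (fst d)) (darts_at Hu w)"
      by (intro inj_on_colours_Hu[OF col] cH) simp_all
  qed
  then show False using not_colourable_Hu by (auto simp: three_edge_colourable_iff)
qed

text \<open>In a lifted matching the new edges take over the role of e.\<close>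

definition lifted :: "('e1 + nat) set \<Rightarrow> 'e2 set \<Rightarrow> ((('e1 + 'e2) + bool) + nat) \<Rightarrow> bool" where
  "lifted M N x = (case x of Inl (Inl (Inl g)) \<Rightarrow> Inl g \<in> M | Inl (Inl (Inr k)) \<Rightarrow> k \<in> N
     | Inl (Inr _) \<Rightarrow> Inl e \<in> M | Inr i \<Rightarrow> Inr i \<in> M)"

definition lift_matching :: "('e1 + nat) set \<Rightarrow> 'e2 set \<Rightarrow> ((('e1 + 'e2) + bool) + nat) set" where
  "lift_matching M N = {x \<in> edges Gu. lifted M N x}"

lemma lifted_inflate_dart_map: "lifted M N (fst (inflate_dart_map dart_H (x, b))) \<longleftrightarrow> x \<in> M"
  by (cases x) (auto simp: fst_inflate_dart_map_dart_H lifted_def)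

lemma lifted_dart_K: "lifted M N (fst ((lift_dart \<circ> dart_K) (k, b))) \<longleftrightarrow> (if k = f then Inl e \<in> M else k \<in> N)"
  by (simp add: lift_dart_def dart_K_def lifted_def)

lemma perfect_matching_lift_matching:
  assumes M: "perfect_matching Hu M" and N: "perfect_matching K N" and eq: "Inl e \<in> M \<longleftrightarrow> f \<in> N"
  shows "perfect_matching Gu (lift_matching M N)"
  unfolding perfect_matching_def
proof (intro conjI ballI)
  fix w assume w: "w \<in> verts Gu"
  have mem: "fst d \<in> lift_matching M N \<longleftrightarrow> lifted M N (fst d)" if "d \<in> darts_at Gu w" for d
    using dart_in_edges[OF that] by (simp add: lift_matching_def)
  from w consider (K) y where "y \<in> verts K" "w = Inl (Inr y)"
    | (H) w' where "w' \<in> verts Hu" "w = map_sum Inl id w'"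
    by (rule verts_Gu_cases)
  then show "card {d \<in> darts_at Gu w. fst d \<in> lift_matching M N} = 1"
  proof cases
    case (H w')
    have "fst d \<in> M \<longleftrightarrow> fst (inflate_dart_map dart_H d) \<in> lift_matching M N"
      if "d \<in> darts_at Hu w'" for d
      using bij_betwE[OF bij_betw_darts_Gu] that H mem lifted_inflate_dart_map[of M N "fst d" "snd d"] by auto
    then show ?thesis unfolding H(2) by (intro perfect_matching_card_Gu[OF M H(1)]) simp_all
  next
    case (K y)
    note bij = bij_betw_darts_Gu_Inl_Inr[of y, folded K(2)]
    have "card {a \<in> darts_at K y. fst a \<in> N} = card {d \<in> darts_at Gu w. fst d \<in> lift_matching M N}"
    proof (rule card_Collect_bij_betw[OF bij])
      fix a assume "a \<in> darts_at K y"
      then have "(lift_dart \<circ> dart_K) a \<in> darts_at Gu w" using bij by (rule bij_betwE[rule_format, rotated])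
      then show "fst a \<in> N \<longleftrightarrow> fst ((lift_dart \<circ> dart_K) a) \<in> lift_matching M N"
        using mem lifted_dart_K[of M N "fst a" "snd a"] eq by simp
    qed
    then show ?thesis using N K(1) by (simp add: perfect_matching_def)
  qed
qed (auto simp: lift_matching_def)

lemma lifted_cover:
  fixes \<alpha> :: "('e1 + nat) set \<Rightarrow> nat"
  assumes cov: "pm_cover Hu S" and onto: "{0, 1, 2} \<subseteq> \<alpha> ` S" and x: "x \<in> edges Gu"
  shows "\<exists>M\<in>S. lifted M {k \<in> edges K. c k = \<alpha> M} x"
proof -
  have covered: "\<exists>M\<in>S. y \<in> M" if "y \<in> edges Hu" for y using cov that by (auto simp: pm_cover_def)
  from x consider (H) g where "g \<in> edges H" "x = Inl (Inl (Inl g))"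
    | (K) k where "k \<in> edges K" "x = Inl (Inl (Inr k))" | (N) b where "x = Inl (Inr b)"
    | (T) i where "i \<in> {0, 1, 2}" "x = Inr i"
    by auto
  then show ?thesis
  proof cases
    case (H g)
    then show ?thesis using covered[of "Inl g"] by (auto simp: lifted_def)
  next
    case (K k)
    then have "c k < 3" by (intro three_edge_colouringD(1)[OF colouring_K])
    then have "c k \<in> {0, 1, 2}" by auto
    then have "c k \<in> \<alpha> ` S" using onto by blast
    then show ?thesis using K by (auto simp: lifted_def)
  next
    case N
    then show ?thesis using covered[of "Inl e"] e by (auto simp: lifted_def)
  next
    case (T i)
    then show ?thesis using covered[of "Inr i"] by (auto simp: lifted_def)
  qed
qed

lemma pm_cover_lift_matchings:
  fixes \<alpha> :: "('e1 + nat) set \<Rightarrow> nat"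
  assumes cov: "pm_cover Hu S"
    and \<alpha>: "\<And>M. M \<in> S \<Longrightarrow> \<alpha> M < 3 \<and> (Inl e \<in> M \<longleftrightarrow> \<alpha> M = c f)"
    and onto: "{0, 1, 2} \<subseteq> \<alpha> ` S"
  shows "pm_cover Gu ((\<lambda>M. lift_matching M {k \<in> edges K. c k = \<alpha> M}) ` S)"
  unfolding pm_cover_def
proof (intro conjI ballI)
  show "finite ((\<lambda>M. lift_matching M {k \<in> edges K. c k = \<alpha> M}) ` S)"
    using cov by (simp add: pm_cover_def)
  fix L assume "L \<in> (\<lambda>M. lift_matching M {k \<in> edges K. c k = \<alpha> M}) ` S"
  then obtain M where M: "M \<in> S" "L = lift_matching M {k \<in> edges K. c k = \<alpha> M}" by blast
  have "perfect_matching Hu M" using cov M(1) by (simp add: pm_cover_def)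
  moreover have "perfect_matching K {k \<in> edges K. c k = \<alpha> M}"
    using perfect_matching_colour_class[OF cubic_K colouring_K] \<alpha>[OF M(1)] by blast
  moreover have "Inl e \<in> M \<longleftrightarrow> f \<in> {k \<in> edges K. c k = \<alpha> M}" using \<alpha>[OF M(1)] f by auto
  ultimately show "perfect_matching Gu L" unfolding M(2) by (rule perfect_matching_lift_matching)
next
  show "\<Union>((\<lambda>M. lift_matching M {k \<in> edges K. c k = \<alpha> M}) ` S) = edges Gu"
  proof (rule antisym)
    show "edges Gu \<subseteq> \<Union>((\<lambda>M. lift_matching M {k \<in> edges K. c k = \<alpha> M}) ` S)"
    proof
      fix x assume x: "x \<in> edges Gu"
      then have "\<exists>M\<in>S. lifted M {k \<in> edges K. c k = \<alpha> M} x" by (rule lifted_cover[OF cov onto])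
      then show "x \<in> \<Union>((\<lambda>M. lift_matching M {k \<in> edges K. c k = \<alpha> M}) ` S)"
        using x by (auto simp: lift_matching_def)
    qed
  qed (auto simp: lift_matching_def)
qed

lemma pmi_Gu_le_4: "pmi Gu \<le> 4"
proof -
  obtain S where cov: "pm_cover Hu S" and card: "card S = 4"
    using pmi_attained pmi_Hu by (metis numeral_eq_enat)
  have "Inl e \<in> edges Hu" using e by simp
  then obtain M1 M2 M3 where M: "M1 \<in> S" "M2 \<in> S" "M3 \<in> S"
    "Inl e \<in> M1" "Inl e \<notin> M2" "Inl e \<notin> M3" "M2 \<noteq> M3"
    using pm_cover_obtain_matchings[OF wf_graph_Hu cubic_Hu cov] by metis
  have cf: "c f < 3" using three_edge_colouringD(1)[OF colouring_K f] .
  \<comment> \<open>M2 and M3 carry the two colours of K other than that of f\<close>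
  define \<alpha> where "\<alpha> M = (if Inl e \<in> M then c f else if M = M3 then (c f + 2) mod 3 else (c f + 1) mod 3)"
    for M
  have other: "(c f + 1) mod 3 \<noteq> c f" "(c f + 2) mod 3 \<noteq> c f" using cf by presburger+
  have "\<alpha> M < 3 \<and> (Inl e \<in> M \<longleftrightarrow> \<alpha> M = c f)" for M
    using cf other by (simp add: \<alpha>_def)
  moreover have "{0, 1, 2} \<subseteq> \<alpha> ` S"
  proof
    fix j :: nat assume "j \<in> {0, 1, 2}"
    then have "j = c f \<or> j = (c f + 1) mod 3 \<or> j = (c f + 2) mod 3" using cf by auto presburger+
    moreover have "\<alpha> M1 = c f" "\<alpha> M2 = (c f + 1) mod 3" "\<alpha> M3 = (c f + 2) mod 3"
      using M by (simp_all add: \<alpha>_def)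
    ultimately show "j \<in> \<alpha> ` S" using M(1-3) by (metis image_eqI)
  qed
  ultimately have "pm_cover Gu ((\<lambda>M. lift_matching M {k \<in> edges K. c k = \<alpha> M}) ` S)"
    by (intro pm_cover_lift_matchings[OF cov]) auto
  then have "pmi Gu \<le> enat (card ((\<lambda>M. lift_matching M {k \<in> edges K. c k = \<alpha> M}) ` S))"
    by (rule pmi_le_card)
  also have "\<dots> \<le> 4" using card_image_le[of S] cov card by (simp add: pm_cover_def numeral_eq_enat)
  finally show ?thesis .
qed

lemma apex_two_sum: "apex G (Inl u)"
  by (rule apex_Inl_u[OF two_connected_two_sum not_colourable_Gu pmi_Gu_le_4])

end

section \<open>3-sums\<close>

lemma three_sum_simps [simp]:
  "verts (three_sum H K u' v' \<sigma>) = Inl ` (verts H - {u'}) \<union> Inr ` (verts K - {v'})"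
  "edges (three_sum H K u' v' \<sigma>) =
    Inl ` Inl ` edges_avoiding H u' \<union> Inl ` Inr ` edges_avoiding K v' \<union> Inr ` darts_at H u'"
  "endp (three_sum H K u' v' \<sigma>) (Inl (Inl g)) b = Inl (endp H g b)"
  "endp (three_sum H K u' v' \<sigma>) (Inl (Inr k)) b = Inr (endp K k b)"
  "endp (three_sum H K u' v' \<sigma>) (Inr d) b = (if b then Inr (far_end K (\<sigma> d)) else Inl (far_end H d))"
  by (simp_all add: three_sum_def edges_avoiding_def far_end_def)

locale three_sum_graphs =
  fixes H :: "('v1, 'e1) mgraph" and K :: "('v2, 'e2) mgraph"
    and u' :: 'v1 and v' :: 'v2 and \<sigma> :: "'e1 \<times> bool \<Rightarrow> 'e2 \<times> bool"
  assumes wf_H: "wf_graph H" and cubic_H: "cubic H" and two_connected_H: "two_connected H"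
    and wf_K: "wf_graph K" and cubic_K: "cubic K" and two_connected_K: "two_connected K"
    and u': "u' \<in> verts H" and v': "v' \<in> verts K"
    and \<sigma>: "bij_betw \<sigma> (darts_at H u') (darts_at K v')"
begin

abbreviation "G \<equiv> three_sum H K u' v' \<sigma>"
abbreviation "D \<equiv> darts_at H u'"

definition \<sigma>' :: "'e2 \<times> bool \<Rightarrow> 'e1 \<times> bool" where
  "\<sigma>' = inv_into D \<sigma>"

lemma \<sigma>'_\<sigma>: "d \<in> D \<Longrightarrow> \<sigma>' (\<sigma> d) = d"
  using \<sigma> unfolding \<sigma>'_def by (simp add: bij_betw_def inv_into_f_f)

lemma \<sigma>_\<sigma>': "d \<in> darts_at K v' \<Longrightarrow> \<sigma> (\<sigma>' d) = d"
  using \<sigma> unfolding \<sigma>'_def by (simp add: bij_betw_def f_inv_into_f)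

lemma \<sigma>'_in: "d \<in> darts_at K v' \<Longrightarrow> \<sigma>' d \<in> D"
  using \<sigma> unfolding \<sigma>'_def by (metis bij_betw_def inv_into_into)

lemma \<sigma>_in: "d \<in> D \<Longrightarrow> \<sigma> d \<in> darts_at K v'"
  using \<sigma> by (auto simp: bij_betw_def)

lemma far_end_H_D: "d \<in> D \<Longrightarrow> far_end H d \<in> verts H - {u'}"
  using far_end_in_verts[OF wf_H] far_end_neq[OF wf_H cubic_H two_connected_H] by blast

lemma far_end_K_D: "d \<in> D \<Longrightarrow> far_end K (\<sigma> d) \<in> verts K - {v'}"
  using far_end_in_verts[OF wf_K] far_end_neq[OF wf_K cubic_K two_connected_K] \<sigma>_in by blast

text \<open>A dart at a vertex of H other than u' whose edge ends at u' becomes a dart of the new edge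
  replacing that edge; likewise for K, with the new edge named by its H-side dart.\<close>

definition dart_H :: "'e1 \<times> bool \<Rightarrow> (('e1 + 'e2) + 'e1 \<times> bool) \<times> bool" where
  "dart_H d = (if far_end H d = u' then (Inr (fst d, \<not> snd d), False) else (Inl (Inl (fst d)), snd d))"

definition dart_K :: "'e2 \<times> bool \<Rightarrow> (('e1 + 'e2) + 'e1 \<times> bool) \<times> bool" where
  "dart_K d = (if far_end K d = v' then (Inr (\<sigma>' (fst d, \<not> snd d)), True) else (Inl (Inr (fst d)), snd d))"

lemma inj_dart_H: "inj dart_H"
  unfolding inj_def dart_H_def by (auto simp: prod_eq_iff split: if_splits)

lemma darts_at_Inl:
  assumes x: "x \<in> verts H" "x \<noteq> u'"
  shows "darts_at G (Inl x) = dart_H ` darts_at H x"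
proof (rule set_eqI)
  fix d :: "(('e1 + 'e2) + 'e1 \<times> bool) \<times> bool"
  obtain z b where d: "d = (z, b)" by (cases d)
  show "d \<in> darts_at G (Inl x) \<longleftrightarrow> d \<in> dart_H ` darts_at H x"
  proof (cases z)
    case (Inl z1)
    show ?thesis
    proof (cases z1)
      case (Inl g)
      have "(Inl (Inl g), b) = dart_H (g', b') \<longleftrightarrow> g' = g \<and> b' = b \<and> endp H g (\<not> b) \<noteq> u'" for g' b'
        by (cases b; cases b'; auto simp: dart_H_def far_end_def)
      note iff = this
      have L: "(Inl (Inl g), b) \<in> darts_at G (Inl x) \<longleftrightarrow> g \<in> edges H \<and> endp H g False \<noteq> u' \<and> endp H g True \<noteq> u' \<and> endp H g b = x"
        by (auto simp: darts_at_def edges_avoiding_def)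
      have R: "(Inl (Inl g), b) \<in> dart_H ` darts_at H x \<longleftrightarrow> g \<in> edges H \<and> endp H g b = x \<and> endp H g (\<not> b) \<noteq> u'"
      proof
        assume "(Inl (Inl g), b) \<in> dart_H ` darts_at H x"
        then obtain g' b' where "(g', b') \<in> darts_at H x" "(Inl (Inl g), b) = dart_H (g', b')" by auto
        then show "g \<in> edges H \<and> endp H g b = x \<and> endp H g (\<not> b) \<noteq> u'" using iff by (auto simp: darts_at_def)
      next
        assume "g \<in> edges H \<and> endp H g b = x \<and> endp H g (\<not> b) \<noteq> u'"
        then have "(g, b) \<in> darts_at H x" "(Inl (Inl g), b) = dart_H (g, b)" using iff by (auto simp: darts_at_def)
        then show "(Inl (Inl g), b) \<in> dart_H ` darts_at H x" by (metis image_eqI)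
      qed
      show ?thesis unfolding d \<open>z = Inl z1\<close> Inl L R using x(2) by (cases b) auto
    next
      case (Inr k)
      have "(Inl (Inr k), b) \<noteq> dart_H d'" for d' by (auto simp: dart_H_def far_end_def)
      then show ?thesis unfolding d \<open>z = Inl z1\<close> Inr
        by (auto simp: darts_at_def image_iff)
    qed
  next
    case (Inr d1)
    obtain g c where d1: "d1 = (g, c)" by (cases d1)
    have L: "(Inr (g, c), b) \<in> darts_at G (Inl x) \<longleftrightarrow> \<not> b \<and> (g, c) \<in> D \<and> endp H g (\<not> c) = x"
      by (auto simp: darts_at_def far_end_def)
    have R: "(Inr (g, c), b) \<in> dart_H ` darts_at H x \<longleftrightarrow> \<not> b \<and> (g, c) \<in> D \<and> endp H g (\<not> c) = x"
    proof
      assume "(Inr (g, c), b) \<in> dart_H ` darts_at H x"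
      then obtain g' b' where gb: "(g', b') \<in> darts_at H x" "(Inr (g, c), b) = dart_H (g', b')" by auto
      then have "g' = g" "c = (\<not> b')" "\<not> b" "endp H g' (\<not> b') = u'" by (auto simp: dart_H_def far_end_def split: if_splits)
      then show "\<not> b \<and> (g, c) \<in> D \<and> endp H g (\<not> c) = x" using gb(1) by (auto simp: darts_at_def)
    next
      assume a: "\<not> b \<and> (g, c) \<in> D \<and> endp H g (\<not> c) = x"
      then have "(g, \<not> c) \<in> darts_at H x" "endp H g c = u'" by (auto simp: darts_at_def)
      moreover have "dart_H (g, \<not> c) = (Inr (g, c), False)" using calculation(2) by (simp add: dart_H_def far_end_def)
      ultimately have "(Inr (g, c), False) \<in> dart_H ` darts_at H x" by (metis image_eqI)
      then show "(Inr (g, c), b) \<in> dart_H ` darts_at H x" using a by simp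
    qed
    show ?thesis unfolding d Inr d1 L R ..
  qed
qed

lemma bij_betw_dart_H: "x \<in> verts H - {u'} \<Longrightarrow> bij_betw dart_H (darts_at H x) (darts_at G (Inl x))"
  using darts_at_Inl by (simp add: bij_betw_def inj_on_subset[OF inj_dart_H])

lemma inj_on_dart_K: "inj_on dart_K (darts_at K y)"
proof (rule inj_onI)
  fix d1 d2 assume d: "d1 \<in> darts_at K y" "d2 \<in> darts_at K y" "dart_K d1 = dart_K d2"
  obtain k1 b1 where d1: "d1 = (k1, b1)" by (cases d1)
  obtain k2 b2 where d2: "d2 = (k2, b2)" by (cases d2)
  show "d1 = d2"
  proof (cases "endp K k1 (\<not> b1) = v'")
    case True
    then have T2: "endp K k2 (\<not> b2) = v'" using d(3) unfolding d1 d2 dart_K_def far_end_def by (auto split: if_splits)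
    have "\<sigma>' (k1, \<not> b1) = \<sigma>' (k2, \<not> b2)" using d(3) True T2 unfolding d1 d2 dart_K_def far_end_def by simp
    moreover have "(k1, \<not> b1) \<in> darts_at K v'" "(k2, \<not> b2) \<in> darts_at K v'"
      using True T2 d(1,2) unfolding d1 d2 by (auto simp: darts_at_def)
    ultimately have "(k1, \<not> b1) = (k2, \<not> b2)" by (metis \<sigma>_\<sigma>')
    then show ?thesis unfolding d1 d2 by simp
  next
    case False
    then have "endp K k2 (\<not> b2) \<noteq> v'" using d(3) unfolding d1 d2 dart_K_def far_end_def by (auto split: if_splits)
    then show ?thesis using d(3) False unfolding d1 d2 dart_K_def far_end_def by simp
  qed
qed

lemma darts_at_Inr:
  assumes y: "y \<in> verts K" "y \<noteq> v'"
  shows "darts_at G (Inr y) = dart_K ` darts_at K y"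
proof (rule set_eqI)
  fix d :: "(('e1 + 'e2) + 'e1 \<times> bool) \<times> bool"
  obtain z b where d: "d = (z, b)" by (cases d)
  show "d \<in> darts_at G (Inr y) \<longleftrightarrow> d \<in> dart_K ` darts_at K y"
  proof (cases z)
    case (Inl z1)
    show ?thesis
    proof (cases z1)
      case (Inr k)
      have "(Inl (Inr k), b) = dart_K (g', b') \<longleftrightarrow> g' = k \<and> b' = b \<and> endp K k (\<not> b) \<noteq> v'" for g' b'
        by (cases b; cases b'; auto simp: dart_K_def far_end_def)
      note iff = this
      have L: "(Inl (Inr k), b) \<in> darts_at G (Inr y) \<longleftrightarrow> k \<in> edges K \<and> endp K k False \<noteq> v' \<and> endp K k True \<noteq> v' \<and> endp K k b = y"
        by (auto simp: darts_at_def edges_avoiding_def)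
      have R: "(Inl (Inr k), b) \<in> dart_K ` darts_at K y \<longleftrightarrow> k \<in> edges K \<and> endp K k b = y \<and> endp K k (\<not> b) \<noteq> v'"
      proof
        assume "(Inl (Inr k), b) \<in> dart_K ` darts_at K y"
        then obtain g' b' where "(g', b') \<in> darts_at K y" "(Inl (Inr k), b) = dart_K (g', b')" by auto
        then show "k \<in> edges K \<and> endp K k b = y \<and> endp K k (\<not> b) \<noteq> v'" using iff by (auto simp: darts_at_def)
      next
        assume "k \<in> edges K \<and> endp K k b = y \<and> endp K k (\<not> b) \<noteq> v'"
        then have "(k, b) \<in> darts_at K y" "(Inl (Inr k), b) = dart_K (k, b)" using iff by (auto simp: darts_at_def)
        then show "(Inl (Inr k), b) \<in> dart_K ` darts_at K y" by (metis image_eqI)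
      qed
      show ?thesis unfolding d \<open>z = Inl z1\<close> Inr L R using y(2) by (cases b) auto
    next
      case (Inl g)
      have "(Inl (Inl g), b) \<noteq> dart_K d'" for d' by (auto simp: dart_K_def far_end_def)
      then show ?thesis unfolding d \<open>z = Inl z1\<close> Inl
        by (auto simp: darts_at_def image_iff)
    qed
  next
    case (Inr d1)
    have L: "(Inr d1, b) \<in> darts_at G (Inr y) \<longleftrightarrow> b \<and> d1 \<in> D \<and> far_end K (\<sigma> d1) = y"
      by (auto simp: darts_at_def far_end_def)
    have R: "(Inr d1, b) \<in> dart_K ` darts_at K y \<longleftrightarrow> b \<and> d1 \<in> D \<and> far_end K (\<sigma> d1) = y"
    proof
      assume "(Inr d1, b) \<in> dart_K ` darts_at K y"
      then obtain k b' where kb: "(k, b') \<in> darts_at K y" "(Inr d1, b) = dart_K (k, b')" by auto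
      then have e: "endp K k (\<not> b') = v'" "d1 = \<sigma>' (k, \<not> b')" "b" by (auto simp: dart_K_def far_end_def split: if_splits)
      have kd: "(k, \<not> b') \<in> darts_at K v'" using kb(1) e(1) by (auto simp: darts_at_def)
      then have "d1 \<in> D" "\<sigma> d1 = (k, \<not> b')" using e(2) \<sigma>'_in \<sigma>_\<sigma>' by auto
      then show "b \<and> d1 \<in> D \<and> far_end K (\<sigma> d1) = y" using e(3) kb(1) by (auto simp: far_end_def darts_at_def)
    next
      assume a: "b \<and> d1 \<in> D \<and> far_end K (\<sigma> d1) = y"
      obtain k c where sk: "\<sigma> d1 = (k, c)" by (cases "\<sigma> d1")
      have kd: "(k, c) \<in> darts_at K v'" using \<sigma>_in a sk by metis
      then have "(k, \<not> c) \<in> darts_at K y" using a sk by (auto simp: darts_at_def far_end_def)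
      moreover have "dart_K (k, \<not> c) = (Inr d1, True)"
      proof -
        have "endp K k c = v'" using kd by (simp add: darts_at_def)
        moreover have "\<sigma>' (k, c) = d1" using \<sigma>'_\<sigma>[of d1] a sk by simp
        ultimately show ?thesis by (simp add: dart_K_def far_end_def)
      qed
      ultimately have "(Inr d1, True) \<in> dart_K ` darts_at K y" by (metis image_eqI)
      then show "(Inr d1, b) \<in> dart_K ` darts_at K y" using a by simp
    qed
    show ?thesis unfolding d Inr L R ..
  qed
qed

lemma bij_betw_dart_K: "y \<in> verts K - {v'} \<Longrightarrow> bij_betw dart_K (darts_at K y) (darts_at G (Inr y))"
  using darts_at_Inr inj_on_dart_K by (simp add: bij_betw_def)

lemma wf_graph_three_sum: "wf_graph G"
  unfolding wf_graph_def
proof (intro conjI ballI allI)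
  show "finite (verts G)" using wf_H wf_K by (simp add: wf_graph_def)
  have "finite D" using finite_darts_at[OF wf_H] .
  then show "finite (edges G)" using wf_H wf_K by (simp add: wf_graph_def edges_avoiding_def)
  fix x b assume x: "x \<in> edges G"
  show "endp G x b \<in> verts G"
  proof (cases x)
    case (Inr d)
    then have "d \<in> D" using x by auto
    then show ?thesis using far_end_H_D far_end_K_D Inr by auto
  next
    case (Inl z)
    then show ?thesis using x endp_in_verts[OF wf_H] endp_in_verts[OF wf_K]
      by (cases b; auto simp: edges_avoiding_def)
  qed
qed

lemma cubic_three_sum: "cubic G"
  unfolding cubic_def
proof
  fix w assume "w \<in> verts G"
  then consider (H) x where "x \<in> verts H - {u'}" "w = Inl x" | (K) y where "y \<in> verts K - {v'}" "w = Inr y" by auto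
  then show "card (darts_at G w) = 3"
  proof cases
    case H then show ?thesis using bij_betw_same_card[OF bij_betw_dart_H[OF H(1)]] cubic_H by (simp add: cubic_def)
  next
    case K then show ?thesis using bij_betw_same_card[OF bij_betw_dart_K[OF K(1)]] cubic_K by (simp add: cubic_def)
  qed
qed

definition H_side :: "('v1 + 'v2) set \<Rightarrow> ('e1 \<times> bool) set" where
  "H_side S = {d \<in> D. Inl (far_end H d) \<in> S}"

definition K_side :: "('v1 + 'v2) set \<Rightarrow> ('e1 \<times> bool) set" where
  "K_side S = {d \<in> D. Inr (far_end K (\<sigma> d)) \<in> S}"

lemma card_cut_edges_three_sum:
  "card (cut_edges H (Inl -` S) \<inter> edges_avoiding H u') + card (cut_edges K (Inr -` S) \<inter> edges_avoiding K v')
    + card (sym_diff (H_side S) (K_side S)) \<le> card (cut_edges G S)"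
  (is "card ?IH + card ?IK + card ?N \<le> _")
proof -
  have fin: "finite ?IH" "finite ?IK" "finite ?N"
    using finite_cut_edges[OF wf_H] finite_cut_edges[OF wf_K] finite_darts_at[OF wf_H]
    by (auto simp: H_side_def K_side_def)
  have "card (Inl ` Inl ` ?IH \<union> Inl ` Inr ` ?IK \<union> Inr ` ?N) =
      card (Inl ` Inl ` ?IH :: (('e1 + 'e2) + 'e1 \<times> bool) set)
      + card (Inl ` Inr ` ?IK :: (('e1 + 'e2) + 'e1 \<times> bool) set)
      + card (Inr ` ?N :: (('e1 + 'e2) + 'e1 \<times> bool) set)"
    using fin by (subst card_Un_disjoint; auto)+
  then have "card ?IH + card ?IK + card ?N = card (Inl ` Inl ` ?IH \<union> Inl ` Inr ` ?IK \<union> Inr ` ?N)"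
    by (simp add: card_image inj_on_def)
  also have "\<dots> \<le> card (cut_edges G S)"
  proof (rule card_mono[OF finite_cut_edges[OF wf_graph_three_sum]])
    show "Inl ` Inl ` ?IH \<union> Inl ` Inr ` ?IK \<union> Inr ` ?N \<subseteq> cut_edges G S"
      by (auto simp: cut_edges_def edges_avoiding_def H_side_def K_side_def)
  qed
  finally show ?thesis .
qed

lemma H_side_bounds:
  assumes "S \<subseteq> verts G"
  shows "Inl -` S \<noteq> {} \<Longrightarrow>
      2 \<le> card (cut_edges H (Inl -` S) \<inter> edges_avoiding H u') + card (H_side S)"
    and "Inl -` S \<noteq> verts H - {u'} \<Longrightarrow>
      2 \<le> card (cut_edges H (Inl -` S) \<inter> edges_avoiding H u') + card (D - H_side S)"
proof -
  have S: "Inl -` S \<subseteq> verts H - {u'}" using assms by auto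
  have "D - H_side S = {d \<in> D. far_end H d \<notin> Inl -` S}" by (auto simp: H_side_def)
  then show "Inl -` S \<noteq> {} \<Longrightarrow> 2 \<le> card (cut_edges H (Inl -` S) \<inter> edges_avoiding H u') + card (H_side S)"
    and "Inl -` S \<noteq> verts H - {u'} \<Longrightarrow>
      2 \<le> card (cut_edges H (Inl -` S) \<inter> edges_avoiding H u') + card (D - H_side S)"
    using two_connected_cut_minus_vertex[OF wf_H two_connected_H u' S]
      two_connected_cut_plus_vertex[OF wf_H cubic_H two_connected_H u' S]
    by (simp_all add: H_side_def)
qed

lemma K_side_bounds:
  assumes "S \<subseteq> verts G"
  shows "Inr -` S \<noteq> {} \<Longrightarrow>
      2 \<le> card (cut_edges K (Inr -` S) \<inter> edges_avoiding K v') + card (K_side S)"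
    and "Inr -` S \<noteq> verts K - {v'} \<Longrightarrow>
      2 \<le> card (cut_edges K (Inr -` S) \<inter> edges_avoiding K v') + card (D - K_side S)"
proof -
  have S: "Inr -` S \<subseteq> verts K - {v'}" using assms by auto
  have "card (K_side S) = card {d \<in> darts_at K v'. far_end K d \<in> Inr -` S}"
    unfolding K_side_def by (rule card_Collect_bij_betw[OF \<sigma>]) simp
  moreover have "D - K_side S = {d \<in> D. far_end K (\<sigma> d) \<notin> Inr -` S}" by (auto simp: K_side_def)
  then have "card (D - K_side S) = card {d \<in> darts_at K v'. far_end K d \<notin> Inr -` S}"
    by (simp only:) (rule card_Collect_bij_betw[OF \<sigma>], simp)
  ultimately show "Inr -` S \<noteq> {} \<Longrightarrow>
      2 \<le> card (cut_edges K (Inr -` S) \<inter> edges_avoiding K v') + card (K_side S)"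
    and "Inr -` S \<noteq> verts K - {v'} \<Longrightarrow>
      2 \<le> card (cut_edges K (Inr -` S) \<inter> edges_avoiding K v') + card (D - K_side S)"
    using two_connected_cut_minus_vertex[OF wf_K two_connected_K v' S]
      two_connected_cut_plus_vertex[OF wf_K cubic_K two_connected_K v' S]
    by simp_all
qed

lemma two_connected_three_sum: "two_connected G"
proof (rule two_connectedI_cut_edges[OF wf_graph_three_sum])
  have cD: "card D = 3" using cubic_H u' by (simp add: cubic_def)
  then obtain d where "d \<in> D" by (metis card.empty ex_in_conv zero_neq_numeral)
  then show "verts G \<noteq> {}" using far_end_H_D[OF \<open>d \<in> D\<close>] by auto
  fix S assume S: "S \<subseteq> verts G" "S \<noteq> {}" "S \<noteq> verts G"
  define iH where "iH = card (cut_edges H (Inl -` S) \<inter> edges_avoiding H u')"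
  define iK where "iK = card (cut_edges K (Inr -` S) \<inter> edges_avoiding K v')"
  note H = H_side_bounds[OF S(1), folded iH_def] and K = K_side_bounds[OF S(1), folded iK_def]
  have tot: "iH + iK + card (sym_diff (H_side S) (K_side S)) \<le> card (cut_edges G S)"
    unfolding iH_def iK_def by (rule card_cut_edges_three_sum)
  have sides: "H_side S \<subseteq> D" "K_side S \<subseteq> D" by (auto simp: H_side_def K_side_def)
  then have le3: "card (H_side S) + card (D - H_side S) = 3" "card (K_side S) + card (D - K_side S) = 3"
    using cD finite_darts_at[OF wf_H] by (metis card_Diff_subset card_mono finite_subset le_add_diff_inverse)+
  have S_eq: "S = Inl ` (Inl -` S) \<union> Inr ` (Inr -` S)"
  proof (rule set_eqI)
    fix x show "x \<in> S \<longleftrightarrow> x \<in> Inl ` (Inl -` S) \<union> Inr ` (Inr -` S)" by (cases x) auto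
  qed
  have A0: "H_side S = {}" if "Inl -` S = {}" using that by (auto simp: H_side_def)
  have AD: "H_side S = D" if "Inl -` S = verts H - {u'}" using that far_end_H_D by (auto simp: H_side_def)
  have B0: "K_side S = {}" if "Inr -` S = {}" using that by (auto simp: K_side_def)
  have BD: "K_side S = D" if "Inr -` S = verts K - {v'}" using that far_end_K_D by (auto simp: K_side_def)
  have sym_diff_triv: "sym_diff {} (K_side S) = K_side S" "sym_diff D (K_side S) = D - K_side S"
    "sym_diff (H_side S) {} = H_side S" "sym_diff (H_side S) D = D - H_side S"
    using sides by auto
  consider "Inl -` S = {}" | "Inl -` S = verts H - {u'}" | "Inl -` S \<noteq> {}" "Inl -` S \<noteq> verts H - {u'}"
    by blast
  then show "2 \<le> card (cut_edges G S)"
  proof cases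
    case 1
    then have "Inr -` S \<noteq> {}" using S(2) S_eq by (metis Un_empty_left image_empty)
    then show ?thesis using tot K(1) A0[OF 1] sym_diff_triv by simp
  next
    case 2
    then have "Inr -` S \<noteq> verts K - {v'}" using S(1,3) S_eq by auto
    then show ?thesis using tot K(2) AD[OF 2] sym_diff_triv by simp
  next
    case H_proper: 3
    then have "1 \<le> iH" using H le3 by linarith
    consider "Inr -` S = {}" | "Inr -` S = verts K - {v'}" | "Inr -` S \<noteq> {}" "Inr -` S \<noteq> verts K - {v'}"
      by blast
    then show ?thesis
    proof cases
      case 1
      then show ?thesis using tot H(1) H_proper B0[OF 1] sym_diff_triv by simp
    next
      case 2
      then show ?thesis using tot H(2) H_proper BD[OF 2] sym_diff_triv by simp
    next
      case 3
      then have "1 \<le> iK" using K le3 by linarith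
      then show ?thesis using tot \<open>1 \<le> iH\<close> by linarith
    qed
  qed
qed

end

locale three_sum_apex = three_sum_graphs H K u' v' \<sigma>
  for H :: "('v1, 'e1) mgraph" and K :: "('v2, 'e2) mgraph" and u' v' \<sigma> +
  fixes u :: 'v1 and fH :: "'e1 \<times> bool \<Rightarrow> nat" and c :: "'e2 \<Rightarrow> nat"
  assumes u: "u \<in> verts H" and u_u': "u \<noteq> u'" and fH: "bij_betw fH (darts_at H u) {0, 1, 2}"
    and pmi_Hu: "pmi (inflate H u fH) = 4" and colouring_K: "three_edge_colouring K c"
begin

sublocale inflation_transfer H G dart_H "verts H - {u'}" u fH
  using wf_H cubic_H wf_graph_three_sum cubic_three_sum inj_dart_H bij_betw_dart_H u u_u' fH pmi_Hu
  by unfold_locales auto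

lemma bij_betw_darts_Gu_Inl_Inr:
  "y \<in> verts K \<Longrightarrow> y \<noteq> v' \<Longrightarrow>
    bij_betw (lift_dart \<circ> dart_K) (darts_at K y) (darts_at Gu (Inl (Inr y)))"
  using bij_betw_trans[OF bij_betw_dart_K inj_on_imp_bij_betw[OF inj_on_subset[OF inj_lift_dart]]]
  by (simp add: darts_at_inflate_Inl)

lemma verts_Gu_cases:
  assumes "w \<in> verts Gu"
  obtains (K) y where "y \<in> verts K" "y \<noteq> v'" "w = Inl (Inr y)"
    | (H) w' where "w' \<in> verts Hu" "w' \<noteq> Inl u'" "w = map_sum Inl id w'"
proof -
  from assms consider (K) y where "y \<in> verts K" "y \<noteq> v'" "w = Inl (Inr y)"
    | (H) x where "x \<in> verts H" "x \<noteq> u'" "x \<noteq> u" "w = Inl (Inl x)"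
    | (T) j where "j \<in> {0, 1, 2}" "w = Inr j"
    by auto
  then show thesis
  proof cases
    case (K y) then show ?thesis by (rule that(1))
  next
    case (H x) show ?thesis by (rule that(2)[of "Inl x"]) (use H in auto)
  next
    case (T j) show ?thesis by (rule that(2)[of "Inr j"]) (use T in auto)
  qed
qed

lemma darts_at_Hu_u': "darts_at Hu (Inl u') = lift_dart ` D"
  using u_u' by (intro darts_at_inflate_Inl) simp

lemma new_edge_in_edges_Gu: "d \<in> D \<Longrightarrow> Inl (Inr d) \<in> edges Gu"
proof -
  assume "d \<in> D"
  then have "Inr d \<in> edges G" unfolding three_sum_simps by (intro UnI2 imageI)
  then show ?thesis unfolding inflate_simps by (rule UnI1[OF imageI])
qed

lemma cut_edges_Gu_K: "cut_edges Gu (Inl ` Inr ` (verts K - {v'})) = Inl ` Inr ` D"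
proof (rule set_eqI)
  fix x :: "(('e1 + 'e2) + 'e1 \<times> bool) + nat"
  have "endp K k b \<in> verts K - {v'}" if "k \<in> edges_avoiding K v'" for k b
    using that endp_in_verts[OF wf_K] by (cases b) (auto simp: edges_avoiding_def)
  then show "x \<in> cut_edges Gu (Inl ` Inr ` (verts K - {v'})) \<longleftrightarrow> x \<in> Inl ` Inr ` D"
    using far_end_H_D far_end_K_D
    by (cases x rule: sum.exhaust[case_product sum.exhaust]) (auto simp: cut_edges_def split: sum.splits)
qed

text \<open>K has an even number of vertices, so the K-side of the 3-edge-cut formed by the new
  edges is odd and every colour class of a colouring of Gu meets the cut: the three new edges
  get distinct colours.\<close>

lemma new_edges_distinct_colours:
  assumes col: "three_edge_colouring Gu cG"
  shows "inj_on (\<lambda>d. cG (Inl (Inr d))) D"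
proof -
  let ?S = "Inl ` Inr ` (verts K - {v'}) :: (('v1 + 'v2) + nat) set"
  have "card ?S = card (verts K) - 1" using v' by (simp add: card_image inj_on_def)
  moreover have "card (verts K) \<noteq> 0" using v' wf_K by (auto simp: wf_graph_def)
  ultimately have odd: "odd (card ?S)"
    using even_card_verts_three_edge_colouring[OF wf_K cubic_K colouring_K] by simp
  have hit: "j \<in> (\<lambda>d. cG (Inl (Inr d))) ` D" if "j < 3" for j
  proof -
    have pm: "perfect_matching Gu {g \<in> edges Gu. cG g = j}"
      by (rule perfect_matching_colour_class[OF cubic_Gu col that])
    have "?S \<subseteq> verts Gu" by auto
    from even_card_matching_cut_iff[OF wf_graph_Gu pm this] odd
    have "odd (card ({g \<in> edges Gu. cG g = j} \<inter> Inl ` Inr ` D))" by (simp only: cut_edges_Gu_K) simp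
    then have "{g \<in> edges Gu. cG g = j} \<inter> Inl ` Inr ` D \<noteq> {}" by (metis card.empty even_zero)
    then show ?thesis by blast
  qed
  have lt3: "cG (Inl (Inr d)) < 3" if "d \<in> D" for d
    using three_edge_colouringD(1)[OF col new_edge_in_edges_Gu[OF that]] .
  have "(\<lambda>d. cG (Inl (Inr d))) ` D = {0, 1, 2}"
  proof (intro antisym subsetI)
    fix j assume "j \<in> (\<lambda>d. cG (Inl (Inr d))) ` D"
    then have "j < 3" using lt3 by blast
    then show "j \<in> {0, 1, 2}" by auto
  qed (use hit in auto)
  moreover have "finite D" "card D = 3" using finite_darts_at[OF wf_H] cubic_H u' by (auto simp: cubic_def)
  ultimately show ?thesis by (intro eq_card_imp_inj_on) simp_all
qed

definition edge_G :: "'e1 \<Rightarrow> ('e1 + 'e2) + 'e1 \<times> bool" where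
  "edge_G g = (if endp H g False = u' then Inr (g, False)
     else if endp H g True = u' then Inr (g, True) else Inl (Inl g))"

lemma edge_G_in_edges: "g \<in> edges H \<Longrightarrow> edge_G g \<in> edges G"
  by (auto simp: edge_G_def edges_avoiding_def darts_at_def)

lemma edge_G_D: "d \<in> D \<Longrightarrow> edge_G (fst d) = Inr d"
  using far_end_H_D[of d] by (cases d; cases "snd d") (auto simp: edge_G_def far_end_def darts_at_def)

lemma fst_inflate_dart_map_dart_H:
  assumes "(x, b) \<in> darts_at Hu w" "w \<noteq> Inl u'"
  shows "fst (inflate_dart_map dart_H (x, b)) = (case x of Inl g \<Rightarrow> Inl (edge_G g) | Inr i \<Rightarrow> Inr i)"
proof (cases x)
  case (Inl g)
  then have "endp H g b \<noteq> u'" using assms u_u' by (auto simp: darts_at_def split: if_splits)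
  then show ?thesis using Inl
    by (cases b) (auto simp: inflate_dart_map_def lift_dart_def dart_H_def far_end_def edge_G_def)
qed (simp add: inflate_dart_map_def)

lemma not_colourable_Gu: "\<not> three_edge_colourable Gu"
proof
  assume "three_edge_colourable Gu"
  then obtain cG where col: "three_edge_colouring Gu cG" by (auto simp: three_edge_colourable_iff)
  define cH where "cH x = cG (case x of Inl g \<Rightarrow> Inl (edge_G g) | Inr i \<Rightarrow> Inr i)" for x
  have "three_edge_colouring Hu cH" unfolding three_edge_colouring_def
  proof (intro conjI ballI)
    fix x assume "x \<in> edges Hu"
    then have "(case x of Inl g \<Rightarrow> Inl (edge_G g) | Inr i \<Rightarrow> Inr i) \<in> edges Gu"
      using edge_G_in_edges by auto
    then show "cH x < 3" unfolding cH_def by (rule three_edge_colouringD(1)[OF col])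
  next
    fix w assume w: "w \<in> verts Hu"
    show "inj_on (\<lambda>d. cH (fst d)) (darts_at Hu w)"
    proof (cases "w = Inl u'")
      case True
      have "inj_on ((\<lambda>d. cH (fst d)) \<circ> lift_dart) D"
        using new_edges_distinct_colours[OF col]
        by (rule inj_on_cong[THEN iffD1, rotated]) (simp add: cH_def lift_dart_def edge_G_D)
      then show ?thesis unfolding True darts_at_Hu_u' by (rule inj_on_imageI)
    next
      case False
      have "cH (fst d) = cG (fst (inflate_dart_map dart_H d))" if "d \<in> darts_at Hu w" for d
        using fst_inflate_dart_map_dart_H[of "fst d" "snd d" w] that False by (simp add: cH_def)
      then show ?thesis using w False u' by (intro inj_on_colours_Hu[OF col]) auto
    qed
  qed
  then show False using not_colourable_Hu by (auto simp: three_edge_colourable_iff)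
qed

text \<open>In a lifted matching the new edge Inr d takes over the role of the edge of d.\<close>

definition lifted :: "('e1 + nat) set \<Rightarrow> 'e2 set \<Rightarrow> ((('e1 + 'e2) + 'e1 \<times> bool) + nat) \<Rightarrow> bool" where
  "lifted M N x = (case x of Inl (Inl (Inl g)) \<Rightarrow> Inl g \<in> M | Inl (Inl (Inr k)) \<Rightarrow> k \<in> N
     | Inl (Inr d) \<Rightarrow> Inl (fst d) \<in> M | Inr i \<Rightarrow> Inr i \<in> M)"

definition lift_matching :: "('e1 + nat) set \<Rightarrow> 'e2 set \<Rightarrow> ((('e1 + 'e2) + 'e1 \<times> bool) + nat) set" where
  "lift_matching M N = {x \<in> edges Gu. lifted M N x}"

lemma lifted_inflate_dart_map:
  assumes "(x, b) \<in> darts_at Hu w" "w \<noteq> Inl u'"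
  shows "lifted M N (fst (inflate_dart_map dart_H (x, b))) \<longleftrightarrow> x \<in> M"
  using fst_inflate_dart_map_dart_H[OF assms] by (cases x) (auto simp: lifted_def edge_G_def)

lemma lifted_dart_K:
  "lifted M N (fst ((lift_dart \<circ> dart_K) (k, b))) \<longleftrightarrow>
    (if far_end K (k, b) = v' then Inl (fst (\<sigma>' (k, \<not> b))) \<in> M else k \<in> N)"
  by (simp add: lift_dart_def dart_K_def lifted_def)

lemma perfect_matching_lift_matching:
  assumes M: "perfect_matching Hu M" and N: "perfect_matching K N"
    and eq: "\<And>d. d \<in> D \<Longrightarrow> Inl (fst d) \<in> M \<longleftrightarrow> fst (\<sigma> d) \<in> N"
  shows "perfect_matching Gu (lift_matching M N)"
  unfolding perfect_matching_def
proof (intro conjI ballI)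
  fix w assume w: "w \<in> verts Gu"
  have mem: "fst d \<in> lift_matching M N \<longleftrightarrow> lifted M N (fst d)" if "d \<in> darts_at Gu w" for d
    using dart_in_edges[OF that] by (simp add: lift_matching_def)
  from w show "card {d \<in> darts_at Gu w. fst d \<in> lift_matching M N} = 1"
  proof (cases rule: verts_Gu_cases)
    case (H w')
    have "fst d \<in> M \<longleftrightarrow> fst (inflate_dart_map dart_H d) \<in> lift_matching M N"
      if d: "d \<in> darts_at Hu w'" for d
    proof -
      have "inflate_dart_map dart_H d \<in> darts_at Gu w"
        using bij_betwE[OF bij_betw_darts_Gu[of w']] d H u' by auto
      moreover have "lifted M N (fst (inflate_dart_map dart_H d)) \<longleftrightarrow> fst d \<in> M"
        using lifted_inflate_dart_map[of "fst d" "snd d" w'] d H(2) by simp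
      ultimately show ?thesis using mem by blast
    qed
    then show ?thesis unfolding H(3) using H u' by (intro perfect_matching_card_Gu[OF M H(1)]) auto
  next
    case (K y)
    note bij = bij_betw_darts_Gu_Inl_Inr[OF K(1,2), folded K(3)]
    have "card {a \<in> darts_at K y. fst a \<in> N} = card {d \<in> darts_at Gu w. fst d \<in> lift_matching M N}"
    proof (rule card_Collect_bij_betw[OF bij])
      fix a assume a: "a \<in> darts_at K y"
      obtain k b where kb: "a = (k, b)" by (cases a)
      have "k \<in> N \<longleftrightarrow> Inl (fst (\<sigma>' (k, \<not> b))) \<in> M" if "far_end K (k, b) = v'"
      proof -
        have "(k, \<not> b) \<in> darts_at K v'" using a kb that by (simp add: darts_at_def far_end_def)
        then show ?thesis using eq[OF \<sigma>'_in] \<sigma>_\<sigma>' by auto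
      qed
      moreover have "(lift_dart \<circ> dart_K) a \<in> darts_at Gu w" using bij a by (rule bij_betwE[rule_format])
      ultimately show "fst a \<in> N \<longleftrightarrow> fst ((lift_dart \<circ> dart_K) a) \<in> lift_matching M N"
        using mem lifted_dart_K kb by auto
    qed
    then show ?thesis using N K(1) by (simp add: perfect_matching_def)
  qed
qed (auto simp: lift_matching_def)

lemma lifted_cover:
  fixes \<alpha> :: "('e1 + nat) set \<Rightarrow> nat"
  assumes cov: "pm_cover Hu S" and onto: "{0, 1, 2} \<subseteq> \<alpha> ` S" and x: "x \<in> edges Gu"
  shows "\<exists>M\<in>S. lifted M {k \<in> edges K. c k = \<alpha> M} x"
proof -
  have covered: "\<exists>M\<in>S. y \<in> M" if "y \<in> edges Hu" for y using cov that by (auto simp: pm_cover_def)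
  from x consider (H) g where "g \<in> edges_avoiding H u'" "x = Inl (Inl (Inl g))"
    | (K) k where "k \<in> edges_avoiding K v'" "x = Inl (Inl (Inr k))"
    | (N) d where "d \<in> D" "x = Inl (Inr d)" | (T) i where "i \<in> {0, 1, 2}" "x = Inr i"
    by auto
  then show ?thesis
  proof cases
    case (H g)
    then have "Inl g \<in> edges Hu" by (simp add: edges_avoiding_def)
    then show ?thesis using covered H by (auto simp: lifted_def)
  next
    case (K k)
    then have "c k < 3" by (intro three_edge_colouringD(1)[OF colouring_K]) (simp add: edges_avoiding_def)
    then have "c k \<in> {0, 1, 2}" by auto
    then have "c k \<in> \<alpha> ` S" using onto by blast
    then show ?thesis using K by (auto simp: lifted_def edges_avoiding_def)
  next
    case (N d)
    then have "Inl (fst d) \<in> edges Hu" using dart_in_edges[OF N(1)] by simp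
    then show ?thesis using covered N by (auto simp: lifted_def)
  next
    case (T i)
    then show ?thesis using covered[of "Inr i"] by (auto simp: lifted_def)
  qed
qed

lemma pm_cover_lift_matchings:
  fixes \<alpha> :: "('e1 + nat) set \<Rightarrow> nat"
  assumes cov: "pm_cover Hu S"
    and \<alpha>: "\<And>M. M \<in> S \<Longrightarrow> \<alpha> M < 3 \<and> (\<forall>d\<in>D. Inl (fst d) \<in> M \<longleftrightarrow> c (fst (\<sigma> d)) = \<alpha> M)"
    and onto: "{0, 1, 2} \<subseteq> \<alpha> ` S"
  shows "pm_cover Gu ((\<lambda>M. lift_matching M {k \<in> edges K. c k = \<alpha> M}) ` S)"
  unfolding pm_cover_def
proof (intro conjI ballI)
  show "finite ((\<lambda>M. lift_matching M {k \<in> edges K. c k = \<alpha> M}) ` S)"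
    using cov by (simp add: pm_cover_def)
  fix L assume "L \<in> (\<lambda>M. lift_matching M {k \<in> edges K. c k = \<alpha> M}) ` S"
  then obtain M where M: "M \<in> S" "L = lift_matching M {k \<in> edges K. c k = \<alpha> M}" by blast
  have "perfect_matching Hu M" using cov M(1) by (simp add: pm_cover_def)
  moreover have "perfect_matching K {k \<in> edges K. c k = \<alpha> M}"
    using perfect_matching_colour_class[OF cubic_K colouring_K] \<alpha>[OF M(1)] by blast
  moreover have "Inl (fst d) \<in> M \<longleftrightarrow> fst (\<sigma> d) \<in> {k \<in> edges K. c k = \<alpha> M}" if "d \<in> D" for d
    using \<alpha>[OF M(1)] that dart_in_edges[OF \<sigma>_in[OF that]] by auto
  ultimately show "perfect_matching Gu L" unfolding M(2) by (rule perfect_matching_lift_matching)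
next
  show "\<Union>((\<lambda>M. lift_matching M {k \<in> edges K. c k = \<alpha> M}) ` S) = edges Gu"
  proof (rule antisym)
    show "edges Gu \<subseteq> \<Union>((\<lambda>M. lift_matching M {k \<in> edges K. c k = \<alpha> M}) ` S)"
    proof
      fix x assume x: "x \<in> edges Gu"
      then have "\<exists>M\<in>S. lifted M {k \<in> edges K. c k = \<alpha> M} x" by (rule lifted_cover[OF cov onto])
      then show "x \<in> \<Union>((\<lambda>M. lift_matching M {k \<in> edges K. c k = \<alpha> M}) ` S)"
        using x by (auto simp: lift_matching_def)
    qed
  qed (auto simp: lift_matching_def)
qed

lemma perfect_matching_Hu_at_u':
  assumes "perfect_matching Hu M"
  shows "\<exists>!d. d \<in> D \<and> Inl (fst d) \<in> M"
proof -
  have "Inl u' \<in> verts Hu" using u' u_u' by simp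
  then have "card {a \<in> darts_at Hu (Inl u'). fst a \<in> M} = 1"
    using assms unfolding perfect_matching_def by blast
  then have "card {a \<in> lift_dart ` D. fst a \<in> M} = 1" by (simp only: darts_at_Hu_u')
  moreover have "{a \<in> lift_dart ` D. fst a \<in> M} = lift_dart ` {d \<in> D. Inl (fst d) \<in> M}"
    by (auto simp: lift_dart_def)
  ultimately have "card {d \<in> D. Inl (fst d) \<in> M} = 1"
    by (simp add: card_image inj_on_subset[OF inj_lift_dart])
  then obtain d0 where d0: "{d \<in> D. Inl (fst d) \<in> M} = {d0}" by (rule card_1_singletonE)
  then have "d0 \<in> D \<and> Inl (fst d0) \<in> M" by blast
  moreover have "d = d0" if "d \<in> D \<and> Inl (fst d) \<in> M" for d using d0 that by blast
  ultimately show ?thesis by blast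
qed

lemma pmi_Gu_le_4: "pmi Gu \<le> 4"
proof -
  obtain S where cov: "pm_cover Hu S" and card: "card S = 4"
    using pmi_attained pmi_Hu by (metis numeral_eq_enat)
  have pm: "perfect_matching Hu M" if "M \<in> S" for M using cov that by (simp add: pm_cover_def)
  \<comment> \<open>each matching of the cover takes the colour that c gives to the partner of its dart at u'\<close>
  define dM where "dM M = (THE d. d \<in> D \<and> Inl (fst d) \<in> M)" for M :: "('e1 + nat) set"
  define \<alpha> where "\<alpha> M = c (fst (\<sigma> (dM M)))" for M
  have dM: "dM M \<in> D" "Inl (fst (dM M)) \<in> M" "\<And>d. d \<in> D \<Longrightarrow> Inl (fst d) \<in> M \<Longrightarrow> d = dM M"
    if "M \<in> S" for M
    using theI'[OF perfect_matching_Hu_at_u'[OF pm[OF that]]] perfect_matching_Hu_at_u'[OF pm[OF that]]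
    unfolding dM_def by blast+
  have inj_v': "inj_on (\<lambda>d. c (fst d)) (darts_at K v')"
    using three_edge_colouringD(2)[OF colouring_K v'] .
  have "\<alpha> M < 3 \<and> (\<forall>d\<in>D. Inl (fst d) \<in> M \<longleftrightarrow> c (fst (\<sigma> d)) = \<alpha> M)" if M: "M \<in> S" for M
  proof (intro conjI ballI)
    show "\<alpha> M < 3" unfolding \<alpha>_def
      by (rule three_edge_colouringD(1)[OF colouring_K dart_in_edges[OF \<sigma>_in[OF dM(1)[OF M]]]])
    fix d assume d: "d \<in> D"
    show "Inl (fst d) \<in> M \<longleftrightarrow> c (fst (\<sigma> d)) = \<alpha> M"
    proof
      assume "c (fst (\<sigma> d)) = \<alpha> M"
      then have "\<sigma> d = \<sigma> (dM M)"
        using inj_onD[OF inj_v' _ \<sigma>_in[OF d] \<sigma>_in[OF dM(1)[OF M]]] by (simp add: \<alpha>_def)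
      then have "d = dM M" using \<sigma>'_\<sigma>[OF d] \<sigma>'_\<sigma>[OF dM(1)[OF M]] by metis
      then show "Inl (fst d) \<in> M" using dM(2)[OF M] by simp
    qed (use dM(3)[OF M d] in \<open>simp add: \<alpha>_def\<close>)
  qed
  moreover have "{0, 1, 2} \<subseteq> \<alpha> ` S"
  proof
    fix j :: nat assume "j \<in> {0, 1, 2}"
    then obtain d' where d': "d' \<in> darts_at K v'" "c (fst d') = j"
      using colours_at_vertex[OF cubic_K colouring_K v'] by (metis imageE)
    then have "Inl (fst (\<sigma>' d')) \<in> edges Hu" using dart_in_edges[OF \<sigma>'_in[OF d'(1)]] by simp
    then obtain M where M: "M \<in> S" "Inl (fst (\<sigma>' d')) \<in> M" using cov by (auto simp: pm_cover_def)
    then have "\<alpha> M = j" using dM(3)[OF M(1) \<sigma>'_in[OF d'(1)]] \<sigma>_\<sigma>'[OF d'(1)] d'(2) by (simp add: \<alpha>_def)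
    then show "j \<in> \<alpha> ` S" using M(1) by blast
  qed
  ultimately have "pm_cover Gu ((\<lambda>M. lift_matching M {k \<in> edges K. c k = \<alpha> M}) ` S)"
    by (rule pm_cover_lift_matchings[OF cov])
  then have "pmi Gu \<le> enat (card ((\<lambda>M. lift_matching M {k \<in> edges K. c k = \<alpha> M}) ` S))"
    by (rule pmi_le_card)
  also have "\<dots> \<le> 4" using card_image_le[of S] cov card by (simp add: pm_cover_def numeral_eq_enat)
  finally show ?thesis .
qed

lemma apex_three_sum: "apex G (Inl u)"
  by (rule apex_Inl_u[OF two_connected_three_sum not_colourable_Gu pmi_Gu_le_4])

end

theorem lemma6p6:
  fixes H :: "('v1, 'e1) mgraph" and K :: "('v2, 'e2) mgraph" and u :: 'v1
  assumes "snark H"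
    and "pmi H \<ge> 5"
    and "wf_graph K" and "cubic K" and "two_connected K"
    and "three_edge_colourable K"
    and "apex H u"
  shows "(\<forall>e f p. e \<in> edges H \<longrightarrow> f \<in> edges K \<longrightarrow>
            apex (two_sum H K e f p) (Inl u))
       \<and> (\<forall>u' v' \<sigma>. u' \<in> verts H \<longrightarrow> v' \<in> verts K \<longrightarrow>
            bij_betw \<sigma> (darts_at H u') (darts_at K v') \<longrightarrow> u \<noteq> u' \<longrightarrow>
            apex (three_sum H K u' v' \<sigma>) (Inl u))"
proof -
  have H: "wf_graph H" "cubic H" "two_connected H" using assms(1) by (simp_all add: snark_def)
  obtain fH where u: "u \<in> verts H" and fH: "bij_betw fH (darts_at H u) {0, 1, 2}"
    and pmi: "pmi (inflate H u fH) = 4"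
    using assms(7) unfolding apex_def by blast
  obtain c where c: "three_edge_colouring K c" using assms(6) by (auto simp: three_edge_colourable_iff)
  show ?thesis
  proof (intro conjI allI impI)
    fix e f p assume "e \<in> edges H" "f \<in> edges K"
    then interpret two_sum_apex H K e f p u fH c
      using H assms(3-5) u fH pmi c by unfold_locales
    show "apex (two_sum H K e f p) (Inl u)" by (rule apex_two_sum)
  next
    fix u' v' \<sigma> assume "u' \<in> verts H" "v' \<in> verts K"
      "bij_betw \<sigma> (darts_at H u') (darts_at K v')" "u \<noteq> u'"
    then interpret three_sum_apex H K u' v' \<sigma> u fH c
      using H assms(3-5) u fH pmi c by unfold_locales
    show "apex (three_sum H K u' v' \<sigma>) (Inl u)" by (rule apex_three_sum)
  qed
qed

end
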